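(* Let $\varphi$ be a Musielak–Orlicz function of uniformly lower type $p_\varphi^-$ for some $p_\varphi^-\in[1,\infty)$, and suppose the Doob maximal operator $M$ is bounded on $L^{\varphi^*}(\Omega)$. Then there is $C>0$ such that for every $f\in H^S_\varphi(\Omega)$ there exist $h\in G_\varphi(\Omega)$ and $g\in Q_\varphi(\Omega)$ with $f_n=h_n+g_n$ for all $n\in\mathbb Z_+$, $\|h\|_{G_\varphi}\le C\|f\|_{H^S_\varphi}$ and $\|g\|_{Q_\varphi}\le C\|f\|_{H^S_\varphi}$.
   Context: Let $(\Omega,\mathcal F,\mathbb P)$ be a probability space, $(\mathcal F_n)_{n\in\mathbb Z_+}$ a nondecreasing sequence of sub-$\sigma$-algebras, $\mathbb E_n$ the conditional expectations, $M(g):=\sup_n|\mathbb E_ng|$. A Musielak–Orlicz function is $\varphi:\Omega\times[0,\infty)\to[0,\infty)$ with $\varphi(x,\cdot)$ nondecreasing, $\varphi(x,0)=0$, $\lim_{t\to\infty}\varphi(x,t)=\infty$ for each $x$, $\varphi(\cdot,t)$ measurable for each $t$; for such (or $\varphi^*$) $\|g\|_{L^\varphi}:=\inf\{\lambda>0:\int_\Omega\varphi(x,|g|/\lambda)\,d\mathbb P\le1\}$. Uniformly lower type $p$: $\varphi(x,st)\le Cs^p\varphi(x,t)$ for $s\in(0,1)$. $\varphi^*(x,t):=\sup_{u>0}[ut-\varphi(x,u)]$. $\mathcal M$: martingales with $f_0=0$; $d_nf=f_n-f_{n-1}$; $S_n(f)=(\sum_{i\le n}|d_if|^2)^{1/2}$,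 $S(f)=\lim S_n(f)$; $\|f\|_{H^S_\varphi}:=\|S(f)\|_{L^\varphi}$; $\|f\|_{G_\varphi}:=\|\sum_{n\ge1}|d_nf|\|_{L^\varphi}$; $\|f\|_{Q_\varphi}:=\inf\|\lambda_\infty\|_{L^\varphi}$ over nondecreasing nonnegative adapted $(\lambda_n)_{n\in\mathbb Z_+}$ with $S_n(f)\le\lambda_{n-1}$ for all $n\ge1$, $\lambda_\infty=\lim\lambda_n$; each space is the set of $f\in\mathcal M$ with finite quasi-norm. *)

theory Defs
  imports "HOL-Probability.Probability"
begin

definition filtration_seq :: "'a measure \<Rightarrow> (nat \<Rightarrow> 'a measure) \<Rightarrow> bool" where
  "filtration_seq M F \<longleftrightarrow> (\<forall>n. subalgebra M (F n)) \<and> (\<forall>n m. n \<le> m \<longrightarrow> sets (F n) \<subseteq> sets (F m))"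

definition is_martingale0 :: "'a measure \<Rightarrow> (nat \<Rightarrow> 'a measure) \<Rightarrow> (nat \<Rightarrow> 'a \<Rightarrow> real) \<Rightarrow> bool" where
  "is_martingale0 M F f \<longleftrightarrow>
     (\<forall>x\<in>space M. f 0 x = 0) \<and>
     (\<forall>n. integrable M (f n) \<and> f n \<in> borel_measurable (F n)) \<and>
     (\<forall>n. AE x in M. real_cond_exp M (F n) (f (Suc n)) x = f n x)"

definition mart_diff :: "(nat \<Rightarrow> 'a \<Rightarrow> real) \<Rightarrow> nat \<Rightarrow> 'a \<Rightarrow> real" where
  "mart_diff f n x = f n x - f (n - 1) x"

definition sq_fun_n :: "(nat \<Rightarrow> 'a \<Rightarrow> real) \<Rightarrow> nat \<Rightarrow> 'a \<Rightarrow> real" where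
  "sq_fun_n f n x = sqrt (\<Sum>i\<in>{1..n}. (mart_diff f i x)\<^sup>2)"

definition sq_fun :: "(nat \<Rightarrow> 'a \<Rightarrow> real) \<Rightarrow> 'a \<Rightarrow> ennreal" where
  "sq_fun f x = (SUP n. ennreal (sq_fun_n f n x))"

definition musielak_orlicz :: "'a measure \<Rightarrow> ('a \<Rightarrow> real \<Rightarrow> real) \<Rightarrow> bool" where
  "musielak_orlicz M \<phi> \<longleftrightarrow>
     (\<forall>x\<in>space M. mono_on {0..} (\<phi> x) \<and> \<phi> x 0 = 0 \<and> filterlim (\<phi> x) at_top at_top) \<and>
     (\<forall>t\<ge>0. (\<lambda>x. \<phi> x t) \<in> borel_measurable M)"

definition unif_lower_type :: "'a measure \<Rightarrow> ('a \<Rightarrow> real \<Rightarrow> real) \<Rightarrow> real \<Rightarrow> bool" where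
  "unif_lower_type M \<phi> p \<longleftrightarrow>
     (\<exists>C>0. \<forall>x\<in>space M. \<forall>s\<in>{0<..<1}. \<forall>t\<ge>0. \<phi> x (s * t) \<le> C * s powr p * \<phi> x t)"

definition conj_fun :: "('a \<Rightarrow> real \<Rightarrow> real) \<Rightarrow> 'a \<Rightarrow> real \<Rightarrow> ennreal" where
  "conj_fun \<phi> x t = (SUP u\<in>{0<..}. ennreal (u * t - \<phi> x u))"

text \<open>The infimum of the empty set is \<infinity>.\<close>
definition lux :: "'a measure \<Rightarrow> ('a \<Rightarrow> real \<Rightarrow> ennreal) \<Rightarrow> ('a \<Rightarrow> ennreal) \<Rightarrow> ennreal" where
  "lux M \<Phi> g = Inf {ennreal l | l. l > 0 \<and>
      (\<integral>\<^sup>+x. (if g x = \<infinity> then \<infinity> else \<Phi> x (enn2real (g x) / l)) \<partial>M) \<le> 1}"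

definition lux_phi :: "'a measure \<Rightarrow> ('a \<Rightarrow> real \<Rightarrow> real) \<Rightarrow> ('a \<Rightarrow> ennreal) \<Rightarrow> ennreal" where
  "lux_phi M \<phi> g = lux M (\<lambda>x t. ennreal (\<phi> x t)) g"

definition doob_max :: "'a measure \<Rightarrow> (nat \<Rightarrow> 'a measure) \<Rightarrow> ('a \<Rightarrow> real) \<Rightarrow> 'a \<Rightarrow> ennreal" where
  "doob_max M F g x = (SUP n. ennreal \<bar>real_cond_exp M (F n) g x\<bar>)"

definition HS_norm :: "'a measure \<Rightarrow> ('a \<Rightarrow> real \<Rightarrow> real) \<Rightarrow> (nat \<Rightarrow> 'a \<Rightarrow> real) \<Rightarrow> ennreal" where
  "HS_norm M \<phi> f = lux_phi M \<phi> (sq_fun f)"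

definition G_norm :: "'a measure \<Rightarrow> ('a \<Rightarrow> real \<Rightarrow> real) \<Rightarrow> (nat \<Rightarrow> 'a \<Rightarrow> real) \<Rightarrow> ennreal" where
  "G_norm M \<phi> f = lux_phi M \<phi> (\<lambda>x. \<Sum>n. ennreal \<bar>mart_diff f (Suc n) x\<bar>)"

definition Q_control :: "'a measure \<Rightarrow> (nat \<Rightarrow> 'a measure) \<Rightarrow> (nat \<Rightarrow> 'a \<Rightarrow> real) \<Rightarrow> (nat \<Rightarrow> 'a \<Rightarrow> real) \<Rightarrow> bool" where
  "Q_control M F f lam \<longleftrightarrow>
     (\<forall>n. lam n \<in> borel_measurable (F n)) \<and>
     (\<forall>n. \<forall>x\<in>space M. 0 \<le> lam n x \<and> lam n x \<le> lam (Suc n) x) \<and>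
     (\<forall>n\<ge>1. \<forall>x\<in>space M. sq_fun_n f n x \<le> lam (n - 1) x)"

definition Q_norm :: "'a measure \<Rightarrow> (nat \<Rightarrow> 'a measure) \<Rightarrow> ('a \<Rightarrow> real \<Rightarrow> real) \<Rightarrow> (nat \<Rightarrow> 'a \<Rightarrow> real) \<Rightarrow> ennreal" where
  "Q_norm M F \<phi> f = (INF lam\<in>{lam. Q_control M F f lam}. lux_phi M \<phi> (\<lambda>x. SUP n. ennreal (lam n x)))"

end

theory Submission
  imports Defs
begin

text \<open>
  Davis decomposition: let \<open>\<xi>\<^sub>n = d\<^sub>nf\<close> on the set where \<open>S\<^sub>n(f) > 2 S\<^sub>n\<^sub>-\<^sub>1(f)\<close> and \<open>0\<close> elsewhere,
  \<open>\<eta>\<^sub>n = \<bbbE>\<^sub>n\<^sub>-\<^sub>1 \<xi>\<^sub>n\<close>, \<open>h = \<Sum>(\<xi>\<^sub>k - \<eta>\<^sub>k)\<close> and \<open>g = f - h\<close>. The jumps telescope: \<open>\<Sum>|\<xi>\<^sub>k| \<le> 2 S(f)\<close>.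
  Off the jump set \<open>|d\<^sub>kf| \<le> 2 S\<^sub>k\<^sub>-\<^sub>1(f)\<close>, so \<open>S\<^sub>n(g) \<le> 3 S\<^sub>n\<^sub>-\<^sub>1(f) + \<Sum>\<^sub>k\<^sub>\<le>\<^sub>n |\<eta>\<^sub>k|\<close> is
  controlled by a predictable sequence. Both norms thus reduce to the dual Doob inequality
  \<open>\<Sum> \<bbbE>\<^sub>k\<^sub>-\<^sub>1 |\<xi>\<^sub>k| \<lesssim> \<Sum> |\<xi>\<^sub>k|\<close> in \<open>L\<^sup>\<phi>\<close>, which follows by duality from the boundedness of the
  Doob maximal operator on \<open>L\<^sup>\<phi>\<^sup>*\<close>: test against the weight \<open>w = \<phi>(u)/u\<close>, whose conjugate
  modular is controlled by the modular of \<open>u\<close> because \<open>\<phi>\<close> has lower type 1.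
\<close>

lemma ennreal_le_mult_of_forall_less:
  fixes X s :: ennreal
  assumes "s < \<infinity>" "0 < c" "\<And>l. 0 < l \<Longrightarrow> s < ennreal l \<Longrightarrow> X \<le> ennreal (c * l)"
  shows "X \<le> ennreal c * s"
proof (rule ennreal_le_epsilon)
  fix e :: real assume e: "0 < e"
  define s0 where "s0 = enn2real s"
  have s: "s = ennreal s0" "0 \<le> s0" using assms(1) by (auto simp: s0_def)
  have "X \<le> ennreal (c * (s0 + e/c))"
    using assms(2) s e by (intro assms(3)) (auto simp: ennreal_less_iff intro!: add_nonneg_pos)
  also have "c * (s0 + e/c) = c * s0 + e" using assms(2) by (simp add: field_simps)
  also have "ennreal (c * s0 + e) = ennreal c * s + ennreal e"
    using assms(2) s e by (simp add: ennreal_plus ennreal_mult)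
  finally show "X \<le> ennreal c * s + ennreal e" .
qed

definition lux_modular :: "'a measure \<Rightarrow> ('a \<Rightarrow> real \<Rightarrow> ennreal) \<Rightarrow> ('a \<Rightarrow> ennreal) \<Rightarrow> real \<Rightarrow> ennreal" where
  "lux_modular M \<Phi> g l = (\<integral>\<^sup>+x. (if g x = \<infinity> then \<infinity> else \<Phi> x (enn2real (g x) / l)) \<partial>M)"

lemma lux_le_of_lux_modular: "0 < l \<Longrightarrow> lux_modular M \<Phi> g l \<le> 1 \<Longrightarrow> lux M \<Phi> g \<le> ennreal l"
  unfolding lux_def lux_modular_def by (rule Inf_lower) blast

lemma lux_modular_le_one_of_lux_less:
  assumes mono: "\<And>x t t'. x \<in> space M \<Longrightarrow> 0 \<le> t \<Longrightarrow> t \<le> t' \<Longrightarrow> \<Phi> x t \<le> \<Phi> x t'"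
    and less: "lux M \<Phi> g < ennreal l"
  shows "lux_modular M \<Phi> g l \<le> 1"
proof -
  from less obtain l' where l': "0 < l'" "l' < l" "lux_modular M \<Phi> g l' \<le> 1"
    unfolding lux_def lux_modular_def by (auto simp: Inf_less_iff ennreal_less_iff)
  have "lux_modular M \<Phi> g l \<le> lux_modular M \<Phi> g l'"
    unfolding lux_modular_def
  proof (rule nn_integral_mono)
    fix x assume x: "x \<in> space M"
    have "enn2real (g x) / l \<le> enn2real (g x) / l'"
      using l' by (intro divide_left_mono) auto
    then show "(if g x = \<infinity> then \<infinity> else \<Phi> x (enn2real (g x) / l))
        \<le> (if g x = \<infinity> then \<infinity> else \<Phi> x (enn2real (g x) / l'))"
      using mono[OF x] l' by auto
  qed
  then show ?thesis using l' by simp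
qed

section \<open>Musielak--Orlicz functions of lower type 1\<close>

text \<open>
  \<open>phi_ext \<phi> x\<close> is the left-continuous regularisation of \<open>\<phi>(x,\<cdot>)\<close>, extended to \<open>[0,\<infinity>]\<close>
  with value \<open>\<infinity>\<close> at \<open>\<infinity>\<close>. As a supremum over a countable set it is jointly measurable, and it
  is sandwiched between \<open>\<phi>(x,t/2)\<close> and \<open>\<phi>(x,t)\<close>, which costs only a factor 2 in quasi-norms.
\<close>

definition nonneg_rats :: "real set" where "nonneg_rats = {q. q \<in> \<rat> \<and> 0 \<le> q}"

definition phi_ext :: "('a \<Rightarrow> real \<Rightarrow> real) \<Rightarrow> 'a \<Rightarrow> ennreal \<Rightarrow> ennreal" where
  "phi_ext \<phi> x t = (SUP q\<in>nonneg_rats. if ennreal q < t then ennreal (\<phi> x q) else 0)"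

definition phi_modular :: "'a measure \<Rightarrow> ('a \<Rightarrow> real \<Rightarrow> real) \<Rightarrow> ('a \<Rightarrow> ennreal) \<Rightarrow> real \<Rightarrow> ennreal" where
  "phi_modular M \<phi> g l = (\<integral>\<^sup>+x. phi_ext \<phi> x (ennreal (1/l) * g x) \<partial>M)"

text \<open>The rational supremum defining \<open>conj_fun\<close>, kept for measurability.\<close>

definition conj_rat :: "('a \<Rightarrow> real \<Rightarrow> real) \<Rightarrow> 'a \<Rightarrow> ennreal \<Rightarrow> real \<Rightarrow> ennreal" where
  "conj_rat \<phi> x v m =
     (if v = \<infinity> then \<infinity> else (SUP q\<in>nonneg_rats. ennreal (q * (enn2real v / m) - \<phi> x q)))"

definition young_weight :: "('a \<Rightarrow> real \<Rightarrow> real) \<Rightarrow> 'a \<Rightarrow> real \<Rightarrow> real" where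
  "young_weight \<phi> x r = (if 0 < r then enn2real (phi_ext \<phi> x (ennreal r)) / r else 0)"

lemma countable_nonneg_rats: "countable nonneg_rats"
  unfolding nonneg_rats_def by (rule countable_subset[OF _ countable_rat]) auto

lemma phi_ext_mono: "t \<le> t' \<Longrightarrow> phi_ext \<phi> x t \<le> phi_ext \<phi> x t'"
  unfolding phi_ext_def by (rule SUP_mono) (auto intro!: bexI)

lemma phi_ext_zero [simp]: "phi_ext \<phi> x 0 = 0"
proof -
  have "0 \<in> nonneg_rats" by (simp add: nonneg_rats_def)
  then show ?thesis unfolding phi_ext_def by (auto simp: SUP_constant)
qed

lemma phi_ext_le_SUP_min: "phi_ext \<phi> x t \<le> (SUP n. phi_ext \<phi> x (min t (ennreal (real n))))"
  unfolding phi_ext_def[of _ _ t]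
proof (rule SUP_least)
  fix q assume q: "q \<in> nonneg_rats"
  obtain n :: nat where n: "q < real n" using reals_Archimedean2 by blast
  show "(if ennreal q < t then ennreal (\<phi> x q) else 0) \<le> (SUP n. phi_ext \<phi> x (min t (ennreal (real n))))"
  proof (cases "ennreal q < t")
    case True
    then have "ennreal q < min t (ennreal (real n))"
      using n q by (auto simp: nonneg_rats_def ennreal_less_iff)
    then have "ennreal (\<phi> x q) \<le> phi_ext \<phi> x (min t (ennreal (real n)))"
      unfolding phi_ext_def by (intro SUP_upper2[OF q]) auto
    then show ?thesis using True by (auto intro: SUP_upper2)
  qed simp
qed

lemma phi_modular_mono_AE: "(AE x in M. g x \<le> g' x) \<Longrightarrow> phi_modular M \<phi> g l \<le> phi_modular M \<phi> g' l"
  unfolding phi_modular_def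
  by (rule nn_integral_mono_AE) (auto elim!: eventually_mono intro!: phi_ext_mono mult_left_mono)

lemma phi_modular_antimono: "0 < l \<Longrightarrow> l \<le> l' \<Longrightarrow> phi_modular M \<phi> g l' \<le> phi_modular M \<phi> g l"
  unfolding phi_modular_def
  by (rule nn_integral_mono) (auto intro!: phi_ext_mono mult_right_mono ennreal_leI divide_left_mono)

lemma phi_modular_scale:
  assumes "0 < c" "0 < l"
  shows "phi_modular M \<phi> (\<lambda>x. ennreal c * g x) (c*l) = phi_modular M \<phi> g l"
proof -
  have "ennreal (1/(c*l)) * ennreal c = ennreal (1/l)"
    using assms by (simp add: ennreal_mult[symmetric])
  then show ?thesis unfolding phi_modular_def by (simp add: mult.assoc[symmetric])
qed

locale mo_function =
  fixes M :: "'a measure" and \<phi> :: "'a \<Rightarrow> real \<Rightarrow> real" and C0 :: real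
  assumes musielak_orlicz: "musielak_orlicz M \<phi>"
    and C0_ge_1: "1 \<le> C0"
    and lower_type_one: "\<And>x s t. x \<in> space M \<Longrightarrow> 0 < s \<Longrightarrow> s < 1 \<Longrightarrow> 0 \<le> t \<Longrightarrow>
      \<phi> x (s*t) \<le> C0 * s * \<phi> x t"
begin

lemma phi_zero: "x \<in> space M \<Longrightarrow> \<phi> x 0 = 0"
  using musielak_orlicz unfolding musielak_orlicz_def by auto

lemma phi_mono: "x \<in> space M \<Longrightarrow> 0 \<le> t \<Longrightarrow> t \<le> t' \<Longrightarrow> \<phi> x t \<le> \<phi> x t'"
  using musielak_orlicz unfolding musielak_orlicz_def by (auto intro: mono_onD)

lemma phi_nonneg: "x \<in> space M \<Longrightarrow> 0 \<le> t \<Longrightarrow> 0 \<le> \<phi> x t"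
  using phi_mono[of x 0 t] phi_zero by auto

lemma borel_measurable_phi: "0 \<le> t \<Longrightarrow> (\<lambda>x. \<phi> x t) \<in> borel_measurable M"
  using musielak_orlicz unfolding musielak_orlicz_def by auto

lemma phi_at_top: "x \<in> space M \<Longrightarrow> filterlim (\<phi> x) at_top at_top"
  using musielak_orlicz unfolding musielak_orlicz_def by auto

lemma phi_ext_le_phi: "x \<in> space M \<Longrightarrow> 0 \<le> t \<Longrightarrow> phi_ext \<phi> x (ennreal t) \<le> ennreal (\<phi> x t)"
  unfolding phi_ext_def
  by (rule SUP_least) (auto simp: nonneg_rats_def ennreal_less_iff intro!: ennreal_leI phi_mono)

lemma phi_le_phi_ext:
  assumes "x \<in> space M" "0 \<le> t" "ennreal t < t'"
  shows "ennreal (\<phi> x t) \<le> phi_ext \<phi> x t'"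
proof -
  obtain q where q: "q \<in> \<rat>" "t < q" "ennreal q < t'"
  proof (cases t')
    case (real r)
    with assms have "t < r" by (auto simp: ennreal_less_iff)
    from Rats_dense_in_real[OF this] obtain q where "q \<in> \<rat>" "t < q" "q < r" by auto
    then show ?thesis using that real assms by (auto simp: ennreal_less_iff)
  next
    case top
    from Rats_dense_in_real[of t "t+1"] obtain q where "q \<in> \<rat>" "t < q" by auto
    then show ?thesis using that top by auto
  qed
  have "ennreal (\<phi> x t) \<le> ennreal (\<phi> x q)"
    using q assms by (auto intro!: ennreal_leI phi_mono)
  also have "\<dots> \<le> phi_ext \<phi> x t'"
    unfolding phi_ext_def
    by (rule SUP_upper2[of q]) (use q assms in \<open>auto simp: nonneg_rats_def\<close>)
  finally show ?thesis .
qed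

lemma phi_ext_top: "x \<in> space M \<Longrightarrow> phi_ext \<phi> x \<infinity> = \<infinity>"
  unfolding phi_ext_def infinity_ennreal_def
proof (rule ennreal_SUP_eq_top)
  fix n :: nat assume x: "x \<in> space M"
  have "eventually (\<lambda>t. real n \<le> \<phi> x t) at_top"
    using phi_at_top[OF x] by (simp add: filterlim_at_top)
  then obtain T where T: "\<And>t. t \<ge> T \<Longrightarrow> real n \<le> \<phi> x t"
    by (auto simp: eventually_at_top_linorder)
  from Rats_dense_in_real[of "max T 0" "max T 0 + 1"] obtain q where
    q: "q \<in> \<rat>" "max T 0 < q" by auto
  then show "\<exists>i\<in>nonneg_rats. of_nat n \<le> (if ennreal i < top then ennreal (\<phi> x i) else 0)"
    using T[of q]
    by (intro bexI[of _ q]) (auto simp: nonneg_rats_def ennreal_of_nat_eq_real_of_nat intro!: ennreal_leI)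
qed

lemma phi_ext_lower_type_one:
  assumes x: "x \<in> space M" and s: "0 < s" "s < 1"
  shows "phi_ext \<phi> x (ennreal s * t) \<le> ennreal (C0 * s) * phi_ext \<phi> x t"
  unfolding phi_ext_def[of _ _ "ennreal s * t"]
proof (rule SUP_least)
  fix q assume q: "q \<in> nonneg_rats"
  show "(if ennreal q < ennreal s * t then ennreal (\<phi> x q) else 0) \<le> ennreal (C0 * s) * phi_ext \<phi> x t"
  proof (cases "ennreal q < ennreal s * t")
    case True
    have q0: "0 \<le> q" using q by (auto simp: nonneg_rats_def)
    have q_div_s: "ennreal (q/s) < t"
    proof (cases t)
      case (real r)
      then have "q < s * r" using True q0 s by (auto simp: ennreal_mult[symmetric] ennreal_less_iff)
      then have "q/s < r" using s by (simp add: field_simps)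
      then show ?thesis using real q0 s by (auto simp: ennreal_less_iff)
    qed simp
    have "\<phi> x q = \<phi> x (s * (q/s))" using s by simp
    also have "\<dots> \<le> C0 * s * \<phi> x (q/s)" using lower_type_one[OF x s, of "q/s"] q0 s by simp
    finally have "ennreal (\<phi> x q) \<le> ennreal (C0 * s * \<phi> x (q/s))"
      by (rule ennreal_leI)
    also have "\<dots> = ennreal (C0 * s) * ennreal (\<phi> x (q/s))"
      using C0_ge_1 s by (intro ennreal_mult') auto
    also have "\<dots> \<le> ennreal (C0 * s) * phi_ext \<phi> x t"
      by (intro mult_left_mono phi_le_phi_ext x q_div_s) (use q0 s in auto)
    finally show ?thesis using True by simp
  qed simp
qed

lemma borel_measurable_phi_ext [measurable]:
  assumes [measurable]: "g \<in> borel_measurable M"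
  shows "(\<lambda>x. phi_ext \<phi> x (g x)) \<in> borel_measurable M"
  unfolding phi_ext_def
proof (rule borel_measurable_SUP[OF countable_nonneg_rats])
  fix q assume "q \<in> nonneg_rats"
  then have [measurable]: "(\<lambda>x. \<phi> x q) \<in> borel_measurable M"
    by (auto simp: nonneg_rats_def intro: borel_measurable_phi)
  show "(\<lambda>x. if ennreal q < g x then ennreal (\<phi> x q) else 0) \<in> borel_measurable M"
    by measurable
qed

abbreviation "lux_modular_phi \<equiv> lux_modular M (\<lambda>x t. ennreal (\<phi> x t))"

lemma phi_modular_le_lux_modular: "0 < l \<Longrightarrow> phi_modular M \<phi> g l \<le> lux_modular_phi g l"
  unfolding phi_modular_def lux_modular_def
proof (rule nn_integral_mono)
  fix x assume l: "0 < l" and x: "x \<in> space M"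
  show "phi_ext \<phi> x (ennreal (1 / l) * g x) \<le> (if g x = \<infinity> then \<infinity> else ennreal (\<phi> x (enn2real (g x) / l)))"
  proof (cases "g x = \<infinity>")
    case False
    then obtain r where r: "g x = ennreal r" "0 \<le> r" by (cases "g x") auto
    have "ennreal (1/l) * g x = ennreal (r / l)" using r l by (simp add: ennreal_mult[symmetric])
    then show ?thesis using False r l phi_ext_le_phi[OF x, of "r/l"] by simp
  qed simp
qed

lemma lux_modular_le_phi_modular_half: "0 < l \<Longrightarrow> lux_modular_phi g l \<le> phi_modular M \<phi> g (l/2)"
  unfolding phi_modular_def lux_modular_def
proof (rule nn_integral_mono)
  fix x assume l: "0 < l" and x: "x \<in> space M"
  show "(if g x = \<infinity> then \<infinity> else ennreal (\<phi> x (enn2real (g x) / l)))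
      \<le> phi_ext \<phi> x (ennreal (1 / (l/2)) * g x)"
  proof (cases "g x = \<infinity>")
    case True
    then show ?thesis using l phi_ext_top[OF x] by (simp add: ennreal_mult_top)
  next
    case False
    then obtain r where r: "g x = ennreal r" "0 \<le> r" by (cases "g x") auto
    have e: "ennreal (1/(l/2)) * g x = ennreal (2 * (r / l))"
      using r l by (simp add: ennreal_mult[symmetric])
    show ?thesis
    proof (cases "r = 0")
      case True then show ?thesis using r phi_zero[OF x] by simp
    next
      case False
      then have "r/l < 2 * (r/l)" using r l by (auto simp: field_simps)
      then have "ennreal (r/l) < ennreal (2 * (r/l))" using r l by (subst ennreal_less_iff) auto
      then show ?thesis using e r \<open>g x \<noteq> \<infinity>\<close> phi_le_phi_ext[OF x, of "r/l"] l by simp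
    qed
  qed
qed

lemma phi_modular_le_one_of_lux_phi_less:
  assumes "0 < l" "lux_phi M \<phi> g < ennreal l"
  shows "phi_modular M \<phi> g l \<le> 1"
proof -
  have "lux_modular_phi g l \<le> 1"
    using assms(2) unfolding lux_phi_def
    by (intro lux_modular_le_one_of_lux_less) (auto intro: ennreal_leI phi_mono)
  then show ?thesis by (rule order.trans[OF phi_modular_le_lux_modular[OF assms(1)]])
qed

lemma lux_phi_le_of_phi_modular:
  assumes "0 < a" "phi_modular M \<phi> g a \<le> 1"
  shows "lux_phi M \<phi> g \<le> ennreal (2*a)"
  unfolding lux_phi_def
  using assms lux_modular_le_phi_modular_half[of "2*a" g] by (intro lux_le_of_lux_modular) auto

lemma phi_modular_add_le_one:
  assumes [measurable]: "g \<in> borel_measurable M" "g' \<in> borel_measurable M"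
    and a: "0 < a" and r: "phi_modular M \<phi> g a \<le> 1" "phi_modular M \<phi> g' a \<le> 1"
  shows "phi_modular M \<phi> (\<lambda>x. g x + g' x) (4*C0*a) \<le> 1"
proof -
  let ?u = "\<lambda>x. ennreal (1/a) * g x" and ?v = "\<lambda>x. ennreal (1/a) * g' x"
  have s: "0 < 1/(2*C0)" "1/(2*C0) < 1" using C0_ge_1 by (auto simp: field_simps)
  have pointwise: "phi_ext \<phi> x (ennreal (1/(4*C0*a)) * (g x + g' x))
      \<le> ennreal (1/2) * (phi_ext \<phi> x (?u x) + phi_ext \<phi> x (?v x))"
    if x: "x \<in> space M" for x
  proof -
    have e1: "ennreal (1/(4*C0*a)) * 2 = ennreal (1/(2*C0)) * ennreal (1/a)"
      using C0_ge_1 a by (simp add: ennreal_mult[symmetric] ennreal_numeral[symmetric] del: ennreal_numeral)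
    have "ennreal (1/(4*C0*a)) * (g x + g' x) \<le> ennreal (1/(4*C0*a)) * (2 * max (g x) (g' x))"
      by (intro mult_left_mono) (simp_all add: mult_2 add_mono)
    also have "\<dots> = ennreal (1/(2*C0)) * (ennreal (1/a) * max (g x) (g' x))"
      by (simp add: mult.assoc[symmetric] e1)
    also have "ennreal (1/a) * max (g x) (g' x) = max (?u x) (?v x)"
    proof (cases "g x \<le> g' x")
      case True
      then have "?u x \<le> ?v x" by (intro mult_left_mono) auto
      then show ?thesis using True by (simp add: max_absorb2)
    next
      case False
      then have "?v x \<le> ?u x" by (intro mult_left_mono) auto
      then show ?thesis using False by (simp add: max_absorb1)
    qed
    finally have "phi_ext \<phi> x (ennreal (1/(4*C0*a)) * (g x + g' x))
        \<le> phi_ext \<phi> x (ennreal (1/(2*C0)) * max (?u x) (?v x))"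
      by (rule phi_ext_mono)
    also have "\<dots> \<le> ennreal (C0 * (1/(2*C0))) * phi_ext \<phi> x (max (?u x) (?v x))"
      by (rule phi_ext_lower_type_one[OF x s])
    also have "C0 * (1/(2*C0)) = 1/2" using C0_ge_1 by simp
    also have "phi_ext \<phi> x (max (?u x) (?v x)) \<le> phi_ext \<phi> x (?u x) + phi_ext \<phi> x (?v x)"
      by (cases "?u x \<le> ?v x") (auto simp: max_def)
    finally show ?thesis by (simp add: mult_left_mono)
  qed
  have "phi_modular M \<phi> (\<lambda>x. g x + g' x) (4*C0*a)
      \<le> (\<integral>\<^sup>+x. ennreal (1/2) * (phi_ext \<phi> x (?u x) + phi_ext \<phi> x (?v x)) \<partial>M)"
    unfolding phi_modular_def by (rule nn_integral_mono) (rule pointwise)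
  also have "\<dots> = ennreal (1/2) * (phi_modular M \<phi> g a + phi_modular M \<phi> g' a)"
    unfolding phi_modular_def by (simp add: nn_integral_cmult nn_integral_add)
  also have "\<dots> \<le> ennreal (1/2) * 2"
    using add_mono[OF r] by (intro mult_left_mono) (simp_all add: one_add_one)
  also have "\<dots> = 1" using ennreal_mult'[of "1/2" 2] by simp
  finally show ?thesis .
qed


lemma conj_fun_mono: "0 \<le> t \<Longrightarrow> t \<le> t' \<Longrightarrow> conj_fun \<phi> x t \<le> conj_fun \<phi> x t'"
  unfolding conj_fun_def by (rule SUP_mono) (auto intro!: bexI ennreal_leI mult_left_mono)

lemma conj_rat_le_conj_fun:
  assumes x: "x \<in> space M"
  shows "conj_rat \<phi> x v m \<le> (if v = \<infinity> then \<infinity> else conj_fun \<phi> x (enn2real v / m))"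
proof (cases "v = \<infinity>")
  case False
  have "(SUP q\<in>nonneg_rats. ennreal (q * (enn2real v / m) - \<phi> x q)) \<le> conj_fun \<phi> x (enn2real v / m)"
  proof (rule SUP_least)
    fix q assume q: "q \<in> nonneg_rats"
    show "ennreal (q * (enn2real v / m) - \<phi> x q) \<le> conj_fun \<phi> x (enn2real v / m)"
    proof (cases "q = 0")
      case True then show ?thesis using phi_zero[OF x] by simp
    next
      case False
      then have "0 < q" using q by (auto simp: nonneg_rats_def)
      then show ?thesis unfolding conj_fun_def by (intro SUP_upper) auto
    qed
  qed
  then show ?thesis using False by (simp add: conj_rat_def)
qed (simp add: conj_rat_def)

lemma borel_measurable_conj_rat [measurable]:
  assumes [measurable]: "v \<in> borel_measurable M"
  shows "(\<lambda>x. conj_rat \<phi> x (v x) m) \<in> borel_measurable M"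
proof -
  have [measurable]: "(\<lambda>x. SUP q\<in>nonneg_rats. ennreal (q * (enn2real (v x) / m) - \<phi> x q)) \<in> borel_measurable M"
  proof (rule borel_measurable_SUP[OF countable_nonneg_rats])
    fix q assume "q \<in> nonneg_rats"
    then have [measurable]: "(\<lambda>x. \<phi> x q) \<in> borel_measurable M"
      by (auto simp: nonneg_rats_def intro: borel_measurable_phi)
    show "(\<lambda>x. ennreal (q * (enn2real (v x) / m) - \<phi> x q)) \<in> borel_measurable M" by measurable
  qed
  show ?thesis unfolding conj_rat_def by measurable
qed

text \<open>Young's inequality \<open>t y \<le> \<phi>(2t) + \<phi>\<^sup>*(y)\<close>; the factor 2 leaves room for a rational
  point between \<open>t\<close> and \<open>2t\<close>.\<close>

lemma young_phi_ext_conj_rat: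
  assumes x: "x \<in> space M" and b: "0 < b" and m: "0 < m"
  shows "ennreal (1/(2*b)) * u * (ennreal (1/m) * v) \<le> phi_ext \<phi> x (ennreal (1/b) * u) + conj_rat \<phi> x v m"
proof (cases "v = \<infinity> \<or> u = \<infinity>")
  case True
  then show ?thesis using b phi_ext_top[OF x] by (auto simp: conj_rat_def ennreal_mult_top)
next
  case False
  obtain uu where uu: "u = ennreal uu" "0 \<le> uu" using False by (cases u) auto
  obtain vv where vv: "v = ennreal vv" "0 \<le> vv" using False by (cases v) auto
  define t where "t = uu / (2*b)"
  define y where "y = vv / m"
  have t0: "0 \<le> t" "0 \<le> y" using uu vv b m by (auto simp: t_def y_def)
  have lhs: "ennreal (1/(2*b)) * u * (ennreal (1/m) * v) = ennreal (t * y)"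
    using uu vv b m t0 by (simp add: t_def y_def ennreal_mult[symmetric])
  show ?thesis
  proof (cases "t = 0")
    case True then show ?thesis by (subst lhs) simp
  next
    case t_pos: False
    then have "t < 2*t" using t0 by auto
    from Rats_dense_in_real[OF this] obtain q where q: "q \<in> \<rat>" "t < q" "q < 2*t" by auto
    have qQ: "q \<in> nonneg_rats" using q t0 by (auto simp: nonneg_rats_def)
    have "ennreal (t*y) \<le> ennreal (q*y)" using q t0 by (intro ennreal_leI mult_right_mono) auto
    also have "\<dots> \<le> ennreal (\<phi> x q) + ennreal (q*y - \<phi> x q)"
    proof (cases "\<phi> x q \<le> q*y")
      case True
      then show ?thesis
        using phi_nonneg[OF x, of q] q t0 by (subst ennreal_plus[symmetric]) auto
    next
      case False
      then have "ennreal (q*y) \<le> ennreal (\<phi> x q)" by (intro ennreal_leI) auto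
      then show ?thesis by (rule order.trans) simp
    qed
    also have "ennreal (\<phi> x q) \<le> phi_ext \<phi> x (ennreal (1/b) * u)"
    proof -
      have e: "ennreal (1/b) * u = ennreal (2*t)" using uu b by (simp add: t_def ennreal_mult[symmetric])
      show ?thesis unfolding e by (rule phi_le_phi_ext[OF x]) (use q t0 in \<open>auto simp: ennreal_less_iff\<close>)
    qed
    also have "ennreal (q*y - \<phi> x q) \<le> conj_rat \<phi> x v m"
      unfolding conj_rat_def using False vv qQ by (auto simp: y_def intro!: SUP_upper2[OF qQ])
    finally show ?thesis using lhs by (simp add: add_mono)
  qed
qed

lemma nn_integral_mult_le_of_modulars:
  assumes [measurable]: "B \<in> borel_measurable M" "V \<in> borel_measurable M"
    and b: "0 < b" and m: "0 < m"
    and B: "phi_modular M \<phi> B b \<le> 1" and V: "lux_modular M (conj_fun \<phi>) V m \<le> 1"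
  shows "(\<integral>\<^sup>+x. B x * V x \<partial>M) \<le> ennreal (4*b*m)"
proof -
  have conj_V: "(\<integral>\<^sup>+x. conj_rat \<phi> x (V x) m \<partial>M) \<le> 1"
    using V unfolding lux_modular_def
    by (rule order.trans[rotated]) (rule nn_integral_mono, rule conj_rat_le_conj_fun)
  have scale: "ennreal (2*b*m) * (ennreal (1/(2*b)) * ennreal (1/m)) = 1"
    using b m by (simp add: ennreal_mult[symmetric])
  have "(\<integral>\<^sup>+x. B x * V x \<partial>M)
      = (\<integral>\<^sup>+x. ennreal (2*b*m) * (ennreal (1/(2*b)) * B x * (ennreal (1/m) * V x)) \<partial>M)"
  proof (rule nn_integral_cong)
    fix x
    have "ennreal (2*b*m) * (ennreal (1/(2*b)) * B x * (ennreal (1/m) * V x))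
        = ennreal (2*b*m) * (ennreal (1/(2*b)) * ennreal (1/m)) * (B x * V x)"
      by (simp only: mult_ac)
    then show "B x * V x = ennreal (2*b*m) * (ennreal (1/(2*b)) * B x * (ennreal (1/m) * V x))"
      by (simp only: scale mult_1)
  qed
  also have "\<dots> = ennreal (2*b*m) * (\<integral>\<^sup>+x. ennreal (1/(2*b)) * B x * (ennreal (1/m) * V x) \<partial>M)"
    by (rule nn_integral_cmult) simp
  also have "(\<integral>\<^sup>+x. ennreal (1/(2*b)) * B x * (ennreal (1/m) * V x) \<partial>M)
      \<le> (\<integral>\<^sup>+x. phi_ext \<phi> x (ennreal (1/b) * B x) + conj_rat \<phi> x (V x) m \<partial>M)"
    by (rule nn_integral_mono) (rule young_phi_ext_conj_rat[OF _ b m])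
  also have "\<dots> = phi_modular M \<phi> B b + (\<integral>\<^sup>+x. conj_rat \<phi> x (V x) m \<partial>M)"
    unfolding phi_modular_def by (rule nn_integral_add) auto
  also have "\<dots> \<le> 2" using add_mono[OF B conj_V] by (simp add: one_add_one)
  also have "ennreal (2*b*m) * 2 = ennreal (4*b*m)"
    using b m by (simp add: ennreal_mult[symmetric] ennreal_numeral[symmetric] del: ennreal_numeral)
  finally show ?thesis by (simp add: mult_left_mono)
qed

lemma young_weight_nonneg: "0 \<le> young_weight \<phi> x r"
  unfolding young_weight_def by simp

lemma phi_ext_eq_mult_young_weight:
  assumes "0 \<le> r" "phi_ext \<phi> x (ennreal r) \<noteq> \<infinity>"
  shows "phi_ext \<phi> x (ennreal r) = ennreal (r * young_weight \<phi> x r)"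
  using assms by (cases "r = 0") (auto simp: young_weight_def ennreal_enn2real_if)

lemma borel_measurable_young_weight [measurable]:
  assumes [measurable]: "u \<in> borel_measurable M"
  shows "(\<lambda>x. young_weight \<phi> x (u x)) \<in> borel_measurable M"
  unfolding young_weight_def by measurable

lemma young_weight_le:
  assumes x: "x \<in> space M" and r: "0 \<le> r" "r \<le> N"
    and N: "phi_ext \<phi> x (ennreal N) \<le> ennreal R" and R: "0 \<le> R"
  shows "young_weight \<phi> x r \<le> C0 * R / N"
proof (cases "r = 0 \<or> r = N")
  case True
  have "enn2real (phi_ext \<phi> x (ennreal N)) \<le> R" using N R by (intro enn2real_leI) auto
  then show ?thesis
    using True r C0_ge_1 R mult_right_mono[OF C0_ge_1 R] by (auto simp: young_weight_def divide_right_mono)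
next
  case False
  define s where "s = r / N"
  have s: "0 < s" "s < 1" using False r by (auto simp: s_def)
  have "ennreal r = ennreal s * ennreal N" using s r by (simp add: s_def ennreal_mult[symmetric])
  then have "phi_ext \<phi> x (ennreal r) = phi_ext \<phi> x (ennreal s * ennreal N)" by simp
  also have "\<dots> \<le> ennreal (C0 * s) * phi_ext \<phi> x (ennreal N)" by (rule phi_ext_lower_type_one[OF x s])
  also have "\<dots> \<le> ennreal (C0 * s) * ennreal R" by (intro mult_left_mono N) auto
  also have "\<dots> = ennreal (C0 * s * R)" using C0_ge_1 s R by (simp add: ennreal_mult[symmetric])
  finally have "enn2real (phi_ext \<phi> x (ennreal r)) \<le> C0 * s * R"
    using C0_ge_1 s R by (intro enn2real_leI) auto
  then show ?thesis using False r by (simp add: young_weight_def s_def divide_le_eq field_simps)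
qed

text \<open>Lower type 1 makes \<open>\<phi>(v)/v\<close> essentially increasing: \<open>\<phi>(r)/r \<le> C0 \<phi>(v)/v\<close> for
  \<open>r < v\<close>. Hence \<open>v w/C0 \<le> \<phi>(v)\<close> beyond \<open>r\<close>, and \<open>\<phi>\<^sup>*(w/C0) \<le> r w = \<phi>(r)\<close>.\<close>

lemma conj_fun_young_weight_le:
  assumes x: "x \<in> space M" and r: "0 \<le> r" and fin: "phi_ext \<phi> x (ennreal r) \<noteq> \<infinity>"
    and J: "1 \<le> J"
  shows "conj_fun \<phi> x (young_weight \<phi> x r / (C0*J)) \<le> ennreal (1/J) * phi_ext \<phi> x (ennreal r)"
proof -
  define w where "w = young_weight \<phi> x r"
  have w: "0 \<le> w" "r = 0 \<Longrightarrow> w = 0" by (auto simp: w_def young_weight_def)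
  have P: "phi_ext \<phi> x (ennreal r) = ennreal (r*w)"
    unfolding w_def by (rule phi_ext_eq_mult_young_weight[OF r fin])
  have "conj_fun \<phi> x (w/(C0*J)) \<le> ennreal (r*w/J)"
    unfolding conj_fun_def
  proof (rule SUP_least)
    fix v :: real assume "v \<in> {0<..}"
    then have v: "0 < v" by auto
    have pv: "0 \<le> \<phi> x v" using phi_nonneg[OF x] v by auto
    have "v * (w / (C0 * J)) - \<phi> x v \<le> r*w/J"
    proof (cases "w = 0 \<or> v \<le> r")
      case True
      have "v / C0 \<le> v" using C0_ge_1 v by (simp add: divide_le_eq)
      then have "w = 0 \<or> v / C0 \<le> r" using True by auto
      then have "(v / C0) * w \<le> r * w" using w(1) by (metis mult_right_mono mult_zero_right order_refl)
      then have "(v / C0) * w / J \<le> r * w / J" by (rule divide_right_mono) (use J in simp)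
      moreover have "v * (w / (C0 * J)) = (v / C0) * w / J" by simp
      ultimately show ?thesis using pv by linarith
    next
      case False
      define s where "s = r / v"
      have r_pos: "0 < r" using False w r by fastforce
      have s: "0 < s" "s < 1" using False r_pos v by (auto simp: s_def)
      have "ennreal (r*w) = phi_ext \<phi> x (ennreal s * ennreal v)"
        using P s v by (simp add: s_def ennreal_mult[symmetric])
      also have "\<dots> \<le> ennreal (C0 * s) * phi_ext \<phi> x (ennreal v)" by (rule phi_ext_lower_type_one[OF x s])
      also have "\<dots> \<le> ennreal (C0 * s) * ennreal (\<phi> x v)"
        by (intro mult_left_mono phi_ext_le_phi[OF x]) (use v in auto)
      also have "\<dots> = ennreal (C0 * s * \<phi> x v)" by (rule ennreal_mult'[symmetric]) (use C0_ge_1 s in auto)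
      finally have "r * w \<le> C0 * s * \<phi> x v"
        using C0_ge_1 s pv by (subst (asm) ennreal_le_iff) auto
      then have "r * w \<le> C0 * (r / v) * \<phi> x v" by (simp add: s_def)
      then have "v * w \<le> C0 * \<phi> x v" using r_pos v by (simp add: field_simps)
      then have "v * w / (C0 * J) \<le> \<phi> x v / J" using C0_ge_1 J by (simp add: field_simps)
      also have "\<phi> x v / J \<le> \<phi> x v" using J pv mult_left_mono[OF J pv] by (simp add: divide_le_eq)
      finally have "v * (w / (C0 * J)) \<le> \<phi> x v" by simp
      moreover have "0 \<le> r * w / J" using r w J by simp
      ultimately show ?thesis by linarith
    qed
    then show "ennreal (v * (w / (C0 * J)) - \<phi> x v) \<le> ennreal (r*w/J)" by (rule ennreal_leI)
  qed
  then show ?thesis using P J r w by (simp add: w_def ennreal_mult[symmetric])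
qed

lemma lux_conj_young_weight_le:
  assumes [measurable]: "u \<in> borel_measurable M" and u: "\<And>x. 0 \<le> u x"
    and fin: "\<And>x. x \<in> space M \<Longrightarrow> phi_ext \<phi> x (ennreal (u x)) \<noteq> \<infinity>"
    and J: "1 \<le> J" and modular: "(\<integral>\<^sup>+x. phi_ext \<phi> x (ennreal (u x)) \<partial>M) \<le> ennreal J"
  shows "lux M (conj_fun \<phi>) (\<lambda>x. ennreal \<bar>young_weight \<phi> x (u x)\<bar>) \<le> ennreal (C0*J)"
proof (rule lux_le_of_lux_modular)
  show "0 < C0*J" using C0_ge_1 J by simp
  have "lux_modular M (conj_fun \<phi>) (\<lambda>x. ennreal \<bar>young_weight \<phi> x (u x)\<bar>) (C0*J)
      = (\<integral>\<^sup>+x. conj_fun \<phi> x (young_weight \<phi> x (u x) / (C0*J)) \<partial>M)"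
    unfolding lux_modular_def by (rule nn_integral_cong) (simp add: young_weight_nonneg)
  also have "\<dots> \<le> (\<integral>\<^sup>+x. ennreal (1/J) * phi_ext \<phi> x (ennreal (u x)) \<partial>M)"
    by (rule nn_integral_mono) (rule conj_fun_young_weight_le[OF _ u fin J])
  also have "\<dots> = ennreal (1/J) * (\<integral>\<^sup>+x. phi_ext \<phi> x (ennreal (u x)) \<partial>M)"
    by (rule nn_integral_cmult) simp
  also have "\<dots> \<le> ennreal (1/J) * ennreal J" by (rule mult_left_mono[OF modular]) simp
  also have "\<dots> = 1" using J by (simp add: ennreal_mult[symmetric])
  finally show "lux_modular M (conj_fun \<phi>) (\<lambda>x. ennreal \<bar>young_weight \<phi> x (u x)\<bar>) (C0*J) \<le> 1" .
qed

end

section \<open>The Davis decomposition\<close>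

lemma sq_fun_n_eq_L2_set: "sq_fun_n f n x = L2_set (\<lambda>i. mart_diff f i x) {1..n}"
  unfolding sq_fun_n_def L2_set_def ..

lemma sq_fun_n_nonneg: "0 \<le> sq_fun_n f n x"
  unfolding sq_fun_n_eq_L2_set by simp

lemma sq_fun_n_Suc: "sq_fun_n f (Suc n) x = sqrt ((mart_diff f (Suc n) x)\<^sup>2 + (sq_fun_n f n x)\<^sup>2)"
proof -
  have "{1..Suc n} = insert (Suc n) {1..n}" by auto
  then show ?thesis unfolding sq_fun_n_eq_L2_set by simp
qed

lemma sq_fun_n_le_Suc: "sq_fun_n f n x \<le> sq_fun_n f (Suc n) x"
  unfolding sq_fun_n_Suc by (rule real_le_rsqrt) simp

lemma abs_mart_diff_le_sq_fun_n: "\<bar>mart_diff f (Suc n) x\<bar> \<le> sq_fun_n f (Suc n) x"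
  unfolding sq_fun_n_Suc by (rule real_le_rsqrt) simp

lemma ennreal_sq_fun_n_le_sq_fun: "ennreal (sq_fun_n f n x) \<le> sq_fun f x"
  unfolding sq_fun_def by (rule SUP_upper) simp

lemma L2_set_le_of_squares_le:
  "(\<And>i. i \<in> A \<Longrightarrow> (f i)\<^sup>2 \<le> (g i)\<^sup>2) \<Longrightarrow> L2_set f A \<le> L2_set g A"
  unfolding L2_set_def by (intro real_sqrt_le_mono sum_mono)

definition davis_jump :: "(nat \<Rightarrow> 'a \<Rightarrow> real) \<Rightarrow> nat \<Rightarrow> 'a \<Rightarrow> real" where
  "davis_jump f n x = (if 2 * sq_fun_n f (n-1) x < sq_fun_n f n x then mart_diff f n x else 0)"

definition davis_compensator ::
    "'a measure \<Rightarrow> (nat \<Rightarrow> 'a measure) \<Rightarrow> (nat \<Rightarrow> 'a \<Rightarrow> real) \<Rightarrow> nat \<Rightarrow> 'a \<Rightarrow> real" where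
  "davis_compensator M F f n x = (if n = 0 then 0 else real_cond_exp M (F (n-1)) (davis_jump f n) x)"

definition davis_h :: "'a measure \<Rightarrow> (nat \<Rightarrow> 'a measure) \<Rightarrow> (nat \<Rightarrow> 'a \<Rightarrow> real) \<Rightarrow> nat \<Rightarrow> 'a \<Rightarrow> real" where
  "davis_h M F f n x = (\<Sum>k\<in>{1..n}. davis_jump f k x - davis_compensator M F f k x)"

definition davis_g :: "'a measure \<Rightarrow> (nat \<Rightarrow> 'a measure) \<Rightarrow> (nat \<Rightarrow> 'a \<Rightarrow> real) \<Rightarrow> nat \<Rightarrow> 'a \<Rightarrow> real" where
  "davis_g M F f n x = f n x - davis_h M F f n x"

definition jump_variation :: "(nat \<Rightarrow> 'a \<Rightarrow> real) \<Rightarrow> 'a \<Rightarrow> ennreal" where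
  "jump_variation f x = (\<Sum>k. ennreal \<bar>davis_jump f (Suc k) x\<bar>)"

definition predictable_jump_variation ::
    "'a measure \<Rightarrow> (nat \<Rightarrow> 'a measure) \<Rightarrow> (nat \<Rightarrow> 'a \<Rightarrow> real) \<Rightarrow> 'a \<Rightarrow> ennreal" where
  "predictable_jump_variation M F f x =
     (\<Sum>k. ennreal (real_cond_exp M (F k) (\<lambda>y. \<bar>davis_jump f (Suc k) y\<bar>) x))"

lemma abs_davis_jump_le: "\<bar>davis_jump f (Suc n) x\<bar> \<le> 2 * (sq_fun_n f (Suc n) x - sq_fun_n f n x)"
  using abs_mart_diff_le_sq_fun_n[of f n x] sq_fun_n_le_Suc[of f n x] by (auto simp: davis_jump_def)

lemma abs_mart_diff_sub_davis_jump_le: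
  "\<bar>mart_diff f (Suc n) x - davis_jump f (Suc n) x\<bar> \<le> 2 * sq_fun_n f n x"
  using abs_mart_diff_le_sq_fun_n[of f n x] sq_fun_n_nonneg[of f n x] by (auto simp: davis_jump_def)

lemma sum_abs_davis_jump_le: "(\<Sum>k<n. \<bar>davis_jump f (Suc k) x\<bar>) \<le> 2 * sq_fun_n f n x"
proof (induction n)
  case (Suc n)
  then show ?case using abs_davis_jump_le[of f n x] by simp
qed (simp add: sq_fun_n_nonneg)

lemma jump_variation_le: "jump_variation f x \<le> ennreal 2 * sq_fun f x"
proof -
  have "jump_variation f x + 0 \<le> ennreal 2 * sq_fun f x"
    unfolding jump_variation_def
  proof (rule ennreal_suminf_bound_add)
    fix n
    have "(\<Sum>k<n. ennreal \<bar>davis_jump f (Suc k) x\<bar>) \<le> ennreal (2 * sq_fun_n f n x)"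
      using sum_abs_davis_jump_le[of f x n] by (simp add: ennreal_leI)
    also have "\<dots> \<le> ennreal 2 * sq_fun f x"
      using ennreal_sq_fun_n_le_sq_fun[of f n x]
      by (simp add: ennreal_mult sq_fun_n_nonneg mult_left_mono)
    finally show "(\<Sum>k<n. ennreal \<bar>davis_jump f (Suc k) x\<bar>) + 0 \<le> ennreal 2 * sq_fun f x" by simp
  qed
  then show ?thesis by simp
qed

lemma mart_diff_davis_h:
  "mart_diff (davis_h M F f) (Suc n) x = davis_jump f (Suc n) x - davis_compensator M F f (Suc n) x"
  unfolding mart_diff_def davis_h_def by (simp add: sum.cl_ivl_Suc)

lemma mart_diff_davis_g:
  "mart_diff (davis_g M F f) (Suc n) x
     = (mart_diff f (Suc n) x - davis_jump f (Suc n) x) + davis_compensator M F f (Suc n) x"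
  using mart_diff_davis_h[of M F f n x] by (simp add: mart_diff_def davis_g_def)

text \<open>Off the jump set the increments of \<open>f\<close> are dominated by the previous square function.\<close>

lemma sq_fun_n_davis_g_le:
  "sq_fun_n (davis_g M F f) (Suc n) x
     \<le> 3 * sq_fun_n f n x + (\<Sum>k\<in>{1..Suc n}. \<bar>davis_compensator M F f k x\<bar>)"
proof -
  define z where "z = (\<lambda>k. mart_diff f k x - davis_jump f k x)"
  define e where "e = (\<lambda>k. davis_compensator M F f k x)"
  have split: "mart_diff (davis_g M F f) k x = z k + e k" if "k \<in> {1..Suc n}" for k
    using that mart_diff_davis_g[of M F f "k - 1" x] by (auto simp: z_def e_def)
  have z_le: "L2_set z {1..n} \<le> sq_fun_n f n x"
    unfolding sq_fun_n_eq_L2_set z_def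
    by (rule L2_set_le_of_squares_le) (simp add: davis_jump_def)
  have "{1..Suc n} = insert (Suc n) {1..n}" by auto
  then have "L2_set z {1..Suc n} = sqrt ((z (Suc n))\<^sup>2 + (L2_set z {1..n})\<^sup>2)" by simp
  also have "\<dots> \<le> \<bar>z (Suc n)\<bar> + \<bar>L2_set z {1..n}\<bar>" by (rule sqrt_sum_squares_le_sum_abs)
  also have "\<dots> \<le> 3 * sq_fun_n f n x"
    using abs_mart_diff_sub_davis_jump_le[of f n x] z_le by (simp add: z_def)
  finally have z_bound: "L2_set z {1..Suc n} \<le> 3 * sq_fun_n f n x" .
  have "sq_fun_n (davis_g M F f) (Suc n) x = L2_set (\<lambda>k. z k + e k) {1..Suc n}"
    unfolding sq_fun_n_eq_L2_set by (rule L2_set_cong) (auto simp: split)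
  also have "\<dots> \<le> L2_set z {1..Suc n} + L2_set e {1..Suc n}" by (rule L2_set_triangle_ineq)
  also have "\<dots> \<le> 3 * sq_fun_n f n x + (\<Sum>k\<in>{1..Suc n}. \<bar>e k\<bar>)"
    using z_bound L2_set_le_sum_abs[of e "{1..Suc n}"] by linarith
  finally show ?thesis by (simp add: e_def)
qed

locale filtered_prob_space = prob_space M for M :: "'a measure" +
  fixes F :: "nat \<Rightarrow> 'a measure"
  assumes filtration: "filtration_seq M F"
begin

lemma subalgebra_F: "subalgebra M (F n)"
  using filtration unfolding filtration_seq_def by auto

lemma sigma_finite_subalgebra_F: "sigma_finite_subalgebra M (F n)"
proof -
  have "finite_measure_subalgebra M (F n)"
    using subalgebra_F
    by (simp add: finite_measure_subalgebra_def finite_measure_subalgebra_axioms_def finite_measure_axioms)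
  then show ?thesis by (rule finite_measure_subalgebra_is_sigma_finite)
qed

lemma measurable_F_mono: "m \<le> n \<Longrightarrow> f \<in> borel_measurable (F m) \<Longrightarrow> f \<in> borel_measurable (F n)"
proof -
  assume "m \<le> n" "f \<in> borel_measurable (F m)"
  moreover have "sets (F m) \<subseteq> sets (F n)" using filtration \<open>m \<le> n\<close> unfolding filtration_seq_def by auto
  moreover have "space (F m) = space (F n)" using subalgebra_F[of m] subalgebra_F[of n] by (simp add: subalgebra_def)
  ultimately show ?thesis using measurable_mono[of borel borel "F m" "F n"] by auto
qed

lemma measurable_F_imp_M: "f \<in> borel_measurable (F n) \<Longrightarrow> f \<in> borel_measurable M"
  by (rule measurable_from_subalg[OF subalgebra_F])

text \<open>The duality step: \<open>\<integral> (\<bbbE>\<^sub>k Z) w = \<integral> Z (\<bbbE>\<^sub>k w) \<le> \<integral> Z \<cdot> M(w)\<close>.\<close>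

lemma nn_integral_cond_exp_mult_le_doob_max:
  assumes Z: "integrable M Z" "\<And>x. x \<in> space M \<Longrightarrow> 0 \<le> Z x"
    and w[measurable]: "w \<in> borel_measurable M" "\<And>x. x \<in> space M \<Longrightarrow> 0 \<le> w x"
      "\<And>x. x \<in> space M \<Longrightarrow> w x \<le> c"
  shows "(\<integral>\<^sup>+x. ennreal (real_cond_exp M (F k) Z x) * ennreal (w x) \<partial>M)
     \<le> (\<integral>\<^sup>+x. ennreal (Z x) * doob_max M F w x \<partial>M)"
proof -
  interpret sigma_finite_subalgebra M "F k" by (rule sigma_finite_subalgebra_F)
  define E where "E = real_cond_exp M (F k) Z"
  define Ew where "Ew = real_cond_exp M (F k) w"
  have Zm[measurable]: "Z \<in> borel_measurable M" using Z by auto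
  have [measurable]: "E \<in> borel_measurable M" "Ew \<in> borel_measurable M" unfolding E_def Ew_def by auto
  have c: "0 \<le> c" using w not_empty by (meson ex_in_conv order.trans)
  have w_int: "integrable M w" by (rule integrable_const_bound[of _ c]) (use w in auto)
  have E_nonneg: "AE x in M. 0 \<le> E x" unfolding E_def by (rule real_cond_exp_pos) (use Z in auto)
  have Ew_bound: "AE x in M. \<bar>Ew x\<bar> \<le> c"
  proof -
    have "AE x in M. Ew x \<le> c" unfolding Ew_def by (rule real_cond_exp_le_c[OF w_int]) (use w in auto)
    moreover have "AE x in M. 0 \<le> Ew x" unfolding Ew_def by (rule real_cond_exp_pos) (use w in auto)
    ultimately show ?thesis by auto
  qed
  have Ew_w_int: "integrable M (\<lambda>x. E x * w x)"
    by (rule Bochner_Integration.integrable_bound[of _ "\<lambda>x. c * E x"])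
      (use real_cond_exp_int(1)[OF Z(1)] w c in
        \<open>auto intro!: AE_I2 simp: E_def abs_mult mult_right_mono mult.commute\<close>)
  have bound: "AE x in M. norm (\<bar>Ew x\<bar> * Z x) \<le> norm (c * Z x)"
    using Ew_bound AE_space by eventually_elim (use Z c in \<open>auto simp: abs_mult intro!: mult_right_mono\<close>)
  have Ew_Z_int: "integrable M (\<lambda>x. Ew x * Z x)"
    by (rule Bochner_Integration.integrable_bound[of _ "\<lambda>x. c * Z x"]) (use Z(1) bound in \<open>auto simp: abs_mult\<close>)
  have abs_Ew_Z_int: "integrable M (\<lambda>x. \<bar>Ew x\<bar> * Z x)"
    by (rule Bochner_Integration.integrable_bound[of _ "\<lambda>x. c * Z x"]) (use Z(1) bound in auto)
  have "(\<integral>\<^sup>+x. ennreal (E x) * ennreal (w x) \<partial>M) = (\<integral>\<^sup>+x. ennreal (E x * w x) \<partial>M)"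
    by (rule nn_integral_cong) (use w in \<open>simp add: ennreal_mult''\<close>)
  also have "\<dots> = ennreal (\<integral>x. E x * w x \<partial>M)"
    by (rule nn_integral_eq_integral[OF Ew_w_int])
      (use E_nonneg AE_space in \<open>eventually_elim, use w in simp\<close>)
  also have "(\<integral>x. E x * w x \<partial>M) = (\<integral>x. Ew x * Z x \<partial>M)"
    using real_cond_exp_intg(2)[of "\<lambda>x. E x" w] real_cond_exp_intg(2)[of Ew Z] Ew_w_int Ew_Z_int
    by (simp add: E_def Ew_def mult.commute)
  also have "\<dots> \<le> (\<integral>x. \<bar>Ew x\<bar> * Z x \<partial>M)"
    by (rule integral_mono[OF Ew_Z_int abs_Ew_Z_int]) (use Z in \<open>auto intro!: mult_right_mono\<close>)
  also have "ennreal \<dots> = (\<integral>\<^sup>+x. ennreal (\<bar>Ew x\<bar> * Z x) \<partial>M)"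
    by (rule nn_integral_eq_integral[OF abs_Ew_Z_int, symmetric]) (use Z in auto)
  also have "\<dots> \<le> (\<integral>\<^sup>+x. ennreal (Z x) * doob_max M F w x \<partial>M)"
  proof (rule nn_integral_mono)
    fix x assume x: "x \<in> space M"
    have "ennreal \<bar>Ew x\<bar> \<le> doob_max M F w x"
      unfolding doob_max_def Ew_def by (rule SUP_upper) auto
    then show "ennreal (\<bar>Ew x\<bar> * Z x) \<le> ennreal (Z x) * doob_max M F w x"
      using Z(2)[OF x] by (simp add: ennreal_mult mult.commute mult_left_mono)
  qed
  finally show ?thesis by (simp add: E_def ennreal_leI)
qed

lemma nn_integral_suminf_cond_exp_mult_le_doob_max:
  assumes Z: "\<And>k. integrable M (Z k)" "\<And>k x. x \<in> space M \<Longrightarrow> 0 \<le> Z k x"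
    and w[measurable]: "w \<in> borel_measurable M" "\<And>x. x \<in> space M \<Longrightarrow> 0 \<le> w x"
      "\<And>x. x \<in> space M \<Longrightarrow> w x \<le> c"
  shows "(\<integral>\<^sup>+x. (\<Sum>k. ennreal (real_cond_exp M (F k) (Z k) x)) * ennreal (w x) \<partial>M)
     \<le> (\<integral>\<^sup>+x. (\<Sum>k. ennreal (Z k x)) * doob_max M F w x \<partial>M)"
proof -
  have [measurable]: "Z k \<in> borel_measurable M" for k using Z(1) by auto
  have "(\<integral>\<^sup>+x. (\<Sum>k. ennreal (real_cond_exp M (F k) (Z k) x)) * ennreal (w x) \<partial>M)
      = (\<integral>\<^sup>+x. (\<Sum>k. ennreal (real_cond_exp M (F k) (Z k) x) * ennreal (w x)) \<partial>M)"
    by (simp add: ennreal_suminf_multc)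
  also have "\<dots> = (\<Sum>k. \<integral>\<^sup>+x. ennreal (real_cond_exp M (F k) (Z k) x) * ennreal (w x) \<partial>M)"
    by (rule nn_integral_suminf) simp
  also have "\<dots> \<le> (\<Sum>k. \<integral>\<^sup>+x. ennreal (Z k x) * doob_max M F w x \<partial>M)"
    by (intro suminf_le summableI nn_integral_cond_exp_mult_le_doob_max[OF Z w])
  also have "\<dots> = (\<integral>\<^sup>+x. (\<Sum>k. ennreal (Z k x) * doob_max M F w x) \<partial>M)"
    by (rule nn_integral_suminf[symmetric]) (simp add: doob_max_def)
  also have "\<dots> = (\<integral>\<^sup>+x. (\<Sum>k. ennreal (Z k x)) * doob_max M F w x \<partial>M)"
    by (simp add: ennreal_suminf_multc)
  finally show ?thesis .
qed

context
  fixes f :: "nat \<Rightarrow> 'a \<Rightarrow> real"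
  assumes martingale: "is_martingale0 M F f"
begin

lemma martingale_measurable_F: "k \<le> n \<Longrightarrow> f k \<in> borel_measurable (F n)"
  using martingale measurable_F_mono unfolding is_martingale0_def by blast

lemma martingale_integrable: "integrable M (f n)"
  using martingale unfolding is_martingale0_def by auto

lemma mart_diff_measurable_F: "k \<le> n \<Longrightarrow> mart_diff f k \<in> borel_measurable (F n)"
  unfolding mart_diff_def by (intro borel_measurable_diff martingale_measurable_F) auto

lemma sq_fun_n_measurable_F: "k \<le> n \<Longrightarrow> sq_fun_n f k \<in> borel_measurable (F n)"
  unfolding sq_fun_n_def
  by (intro measurable_compose[OF _ borel_measurable_sqrt] borel_measurable_sum borel_measurable_power
      mart_diff_measurable_F) auto

lemma davis_jump_measurable_F: "davis_jump f n \<in> borel_measurable (F n)"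
proof -
  have [measurable]: "sq_fun_n f (n-1) \<in> borel_measurable (F n)" "sq_fun_n f n \<in> borel_measurable (F n)"
    "mart_diff f n \<in> borel_measurable (F n)"
    by (auto intro: sq_fun_n_measurable_F mart_diff_measurable_F)
  show ?thesis unfolding davis_jump_def by measurable
qed

lemma davis_compensator_measurable_F:
  "k \<le> Suc n \<Longrightarrow> davis_compensator M F f k \<in> borel_measurable (F n)"
  unfolding davis_compensator_def[abs_def]
  by (cases "k = 0") (auto intro: measurable_F_mono[of "k-1" n])

lemma davis_h_measurable_F: "davis_h M F f n \<in> borel_measurable (F n)"
  unfolding davis_h_def
  by (intro borel_measurable_sum borel_measurable_diff davis_compensator_measurable_F
      measurable_F_mono[OF _ davis_jump_measurable_F]) auto

lemma davis_g_measurable_F: "davis_g M F f n \<in> borel_measurable (F n)"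
  unfolding davis_g_def
  by (intro borel_measurable_diff martingale_measurable_F davis_h_measurable_F) auto

lemma integrable_davis_jump: "integrable M (davis_jump f n)"
proof (rule Bochner_Integration.integrable_bound)
  show "integrable M (mart_diff f n)"
    unfolding mart_diff_def by (intro Bochner_Integration.integrable_diff martingale_integrable)
  show "davis_jump f n \<in> borel_measurable M" by (rule measurable_F_imp_M[OF davis_jump_measurable_F])
qed (simp add: davis_jump_def)

lemma integrable_davis_compensator: "integrable M (davis_compensator M F f n)"
  using sigma_finite_subalgebra.real_cond_exp_int(1)[OF sigma_finite_subalgebra_F integrable_davis_jump]
  by (cases "n = 0") (simp_all add: davis_compensator_def[abs_def])

lemma integrable_davis_h: "integrable M (davis_h M F f n)"
  unfolding davis_h_def[abs_def]
  by (intro Bochner_Integration.integrable_sum Bochner_Integration.integrable_diff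
      integrable_davis_jump integrable_davis_compensator)

lemma integrable_davis_g: "integrable M (davis_g M F f n)"
  unfolding davis_g_def[abs_def]
  by (intro Bochner_Integration.integrable_diff martingale_integrable integrable_davis_h)

lemma martingale_davis_h: "is_martingale0 M F (davis_h M F f)"
  unfolding is_martingale0_def
proof (intro conjI allI ballI)
  fix n
  interpret sigma_finite_subalgebra M "F n" by (rule sigma_finite_subalgebra_F)
  let ?\<xi> = "davis_jump f (Suc n)" and ?\<eta> = "davis_compensator M F f (Suc n)"
  have step: "davis_h M F f (Suc n) = (\<lambda>x. davis_h M F f n x + (?\<xi> x - ?\<eta> x))"
    by (rule ext) (simp add: davis_h_def sum.cl_ivl_Suc)
  have \<eta>: "?\<eta> = real_cond_exp M (F n) ?\<xi>"
    by (rule ext) (simp add: davis_compensator_def)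
  note int = integrable_davis_h integrable_davis_jump integrable_davis_compensator
  have "AE x in M. real_cond_exp M (F n) (\<lambda>x. davis_h M F f n x + (?\<xi> x - ?\<eta> x)) x
      = real_cond_exp M (F n) (davis_h M F f n) x + real_cond_exp M (F n) (\<lambda>x. ?\<xi> x - ?\<eta> x) x"
    by (rule real_cond_exp_add) (use int in auto)
  moreover have "AE x in M. real_cond_exp M (F n) (\<lambda>x. ?\<xi> x - ?\<eta> x) x
      = real_cond_exp M (F n) ?\<xi> x - real_cond_exp M (F n) ?\<eta> x"
    by (rule real_cond_exp_diff) (use int in auto)
  moreover have "AE x in M. real_cond_exp M (F n) (davis_h M F f n) x = davis_h M F f n x"
    by (rule real_cond_exp_F_meas) (use int davis_h_measurable_F in auto)
  moreover have "AE x in M. real_cond_exp M (F n) ?\<eta> x = ?\<eta> x"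
    by (rule real_cond_exp_F_meas) (use int davis_compensator_measurable_F[of "Suc n" n] in auto)
  ultimately show "AE x in M. real_cond_exp M (F n) (davis_h M F f (Suc n)) x = davis_h M F f n x"
    unfolding step by eventually_elim (simp add: \<eta>)
qed (auto simp: davis_h_def integrable_davis_h davis_h_measurable_F)

lemma martingale_davis_g: "is_martingale0 M F (davis_g M F f)"
  unfolding is_martingale0_def
proof (intro conjI allI ballI)
  fix n
  interpret sigma_finite_subalgebra M "F n" by (rule sigma_finite_subalgebra_F)
  have "AE x in M. real_cond_exp M (F n) (davis_g M F f (Suc n)) x
      = real_cond_exp M (F n) (f (Suc n)) x - real_cond_exp M (F n) (davis_h M F f (Suc n)) x"
    unfolding davis_g_def by (rule real_cond_exp_diff) (use martingale_integrable integrable_davis_h in auto)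
  moreover have "AE x in M. real_cond_exp M (F n) (f (Suc n)) x = f n x"
    using martingale unfolding is_martingale0_def by auto
  moreover have "AE x in M. real_cond_exp M (F n) (davis_h M F f (Suc n)) x = davis_h M F f n x"
    using martingale_davis_h unfolding is_martingale0_def by auto
  ultimately show "AE x in M. real_cond_exp M (F n) (davis_g M F f (Suc n)) x = davis_g M F f n x"
    by eventually_elim (simp add: davis_g_def)
qed (use martingale in \<open>auto simp: davis_g_def davis_h_def is_martingale0_def davis_g_measurable_F
  integrable_davis_g\<close>)

lemma AE_abs_davis_compensator_le:
  "AE x in M. \<forall>n. \<bar>davis_compensator M F f (Suc n) x\<bar>
     \<le> real_cond_exp M (F n) (\<lambda>y. \<bar>davis_jump f (Suc n) y\<bar>) x"
  unfolding AE_all_countable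
proof
  fix n
  interpret sigma_finite_subalgebra M "F n" by (rule sigma_finite_subalgebra_F)
  let ?\<xi> = "davis_jump f (Suc n)"
  have int: "integrable M ?\<xi>" "integrable M (\<lambda>x. - ?\<xi> x)" "integrable M (\<lambda>x. \<bar>?\<xi> x\<bar>)"
    using integrable_davis_jump by auto
  have "AE x in M. real_cond_exp M (F n) ?\<xi> x \<le> real_cond_exp M (F n) (\<lambda>x. \<bar>?\<xi> x\<bar>) x"
    by (rule real_cond_exp_mono[OF _ int(1,3)]) auto
  moreover have "AE x in M. real_cond_exp M (F n) (\<lambda>x. - ?\<xi> x) x \<le> real_cond_exp M (F n) (\<lambda>x. \<bar>?\<xi> x\<bar>) x"
    by (rule real_cond_exp_mono[OF _ int(2,3)]) auto
  moreover have "AE x in M. real_cond_exp M (F n) (\<lambda>x. - ?\<xi> x) x = - real_cond_exp M (F n) ?\<xi> x"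
    using real_cond_exp_cmult[OF int(1), of "-1"] by simp
  ultimately show "AE x in M. \<bar>davis_compensator M F f (Suc n) x\<bar>
      \<le> real_cond_exp M (F n) (\<lambda>y. \<bar>?\<xi> y\<bar>) x"
    by eventually_elim (auto simp: davis_compensator_def)
qed

lemma Q_control_davis_g:
  "Q_control M F (davis_g M F f)
     (\<lambda>m x. 3 * sq_fun_n f m x + (\<Sum>k\<in>{1..Suc m}. \<bar>davis_compensator M F f k x\<bar>))"
  unfolding Q_control_def
proof (intro conjI allI ballI impI)
  fix m
  show "(\<lambda>x. 3 * sq_fun_n f m x + (\<Sum>k\<in>{1..Suc m}. \<bar>davis_compensator M F f k x\<bar>)) \<in> borel_measurable (F m)"
    using sq_fun_n_measurable_F[of m m] davis_compensator_measurable_F[of _ m]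
    by (intro borel_measurable_add borel_measurable_sum borel_measurable_abs) auto
next
  fix n x
  show "0 \<le> 3 * sq_fun_n f n x + (\<Sum>k\<in>{1..Suc n}. \<bar>davis_compensator M F f k x\<bar>)"
    using sq_fun_n_nonneg[of f n x] by (simp add: sum_nonneg)
  show "3 * sq_fun_n f n x + (\<Sum>k\<in>{1..Suc n}. \<bar>davis_compensator M F f k x\<bar>)
      \<le> 3 * sq_fun_n f (Suc n) x + (\<Sum>k\<in>{1..Suc (Suc n)}. \<bar>davis_compensator M F f k x\<bar>)"
    using sq_fun_n_le_Suc[of f n x] by (simp add: sum.cl_ivl_Suc[of _ 1 "Suc n"])
next
  fix n :: nat and x assume "1 \<le> n"
  then show "sq_fun_n (davis_g M F f) n x
      \<le> 3 * sq_fun_n f (n - 1) x + (\<Sum>k\<in>{1..Suc (n - 1)}. \<bar>davis_compensator M F f k x\<bar>)"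
    using sq_fun_n_davis_g_le[of M F f "n - 1" x] by simp
qed

lemma borel_measurable_sq_fun [measurable]: "sq_fun f \<in> borel_measurable M"
proof -
  have [measurable]: "sq_fun_n f n \<in> borel_measurable M" for n
    by (rule measurable_F_imp_M[OF sq_fun_n_measurable_F[of n n]]) simp
  show ?thesis unfolding sq_fun_def[abs_def] by measurable
qed

lemma borel_measurable_jump_variation [measurable]: "jump_variation f \<in> borel_measurable M"
proof -
  have [measurable]: "davis_jump f n \<in> borel_measurable M" for n
    by (rule measurable_F_imp_M[OF davis_jump_measurable_F])
  show ?thesis unfolding jump_variation_def[abs_def] by measurable
qed

lemma borel_measurable_predictable_jump_variation [measurable]:
  "predictable_jump_variation M F f \<in> borel_measurable M"
  unfolding predictable_jump_variation_def[abs_def] by measurable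

lemma AE_davis_h_variation_le:
  "AE x in M. (\<Sum>n. ennreal \<bar>mart_diff (davis_h M F f) (Suc n) x\<bar>)
     \<le> jump_variation f x + predictable_jump_variation M F f x"
  using AE_abs_davis_compensator_le
proof eventually_elim
  case (elim x)
  let ?Z = "\<lambda>n. \<bar>davis_jump f (Suc n) x\<bar>"
  let ?E = "\<lambda>n. real_cond_exp M (F n) (\<lambda>y. \<bar>davis_jump f (Suc n) y\<bar>) x"
  have "ennreal \<bar>mart_diff (davis_h M F f) (Suc n) x\<bar> \<le> ennreal (?Z n) + ennreal (?E n)" for n
  proof -
    have "\<bar>mart_diff (davis_h M F f) (Suc n) x\<bar> \<le> ?Z n + ?E n"
      using elim[rule_format, of n] unfolding mart_diff_davis_h by linarith
    then have "ennreal \<bar>mart_diff (davis_h M F f) (Suc n) x\<bar> \<le> ennreal (?Z n + ?E n)"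
      by (rule ennreal_leI)
    also have "\<dots> = ennreal (?Z n) + ennreal (?E n)"
      using elim[rule_format, of n] by (intro ennreal_plus) auto
    finally show ?thesis .
  qed
  then have "(\<Sum>n. ennreal \<bar>mart_diff (davis_h M F f) (Suc n) x\<bar>) \<le> (\<Sum>n. ennreal (?Z n) + ennreal (?E n))"
    by (intro suminf_le summableI)
  also have "\<dots> = jump_variation f x + predictable_jump_variation M F f x"
    unfolding jump_variation_def predictable_jump_variation_def by (rule suminf_add[OF summableI summableI, symmetric])
  finally show ?case .
qed

lemma AE_davis_g_control_le:
  "AE x in M. (SUP m. ennreal (3 * sq_fun_n f m x + (\<Sum>k\<in>{1..Suc m}. \<bar>davis_compensator M F f k x\<bar>)))
     \<le> ennreal 3 * sq_fun f x + predictable_jump_variation M F f x"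
  using AE_abs_davis_compensator_le
proof eventually_elim
  case (elim x)
  show ?case
  proof (rule SUP_least)
    fix m
    let ?T = "\<Sum>k<Suc m. \<bar>davis_compensator M F f (Suc k) x\<bar>"
    have "(\<Sum>k\<in>{1..Suc m}. \<bar>davis_compensator M F f k x\<bar>) = ?T"
      using sum.atLeast1_atMost_eq[of "\<lambda>k. \<bar>davis_compensator M F f k x\<bar>" "Suc m"] by simp
    then have "ennreal (3 * sq_fun_n f m x + (\<Sum>k\<in>{1..Suc m}. \<bar>davis_compensator M F f k x\<bar>))
        = ennreal (3 * sq_fun_n f m x) + ennreal ?T"
      using sq_fun_n_nonneg[of f m x] by (simp only:) (rule ennreal_plus, auto intro: sum_nonneg)
    also have "\<dots> = ennreal 3 * ennreal (sq_fun_n f m x)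
        + (\<Sum>k<Suc m. ennreal \<bar>davis_compensator M F f (Suc k) x\<bar>)"
      using sq_fun_n_nonneg[of f m x] by (simp add: ennreal_mult)
    also have "\<dots> \<le> ennreal 3 * sq_fun f x + predictable_jump_variation M F f x"
    proof (intro add_mono mult_left_mono ennreal_sq_fun_n_le_sq_fun)
      have "(\<Sum>k<Suc m. ennreal \<bar>davis_compensator M F f (Suc k) x\<bar>)
          \<le> (\<Sum>k. ennreal \<bar>davis_compensator M F f (Suc k) x\<bar>)"
        by (rule sum_le_suminf[OF summableI]) auto
      also have "\<dots> \<le> predictable_jump_variation M F f x"
        unfolding predictable_jump_variation_def
        by (intro suminf_le summableI ennreal_leI elim[rule_format])
      finally show "(\<Sum>k<Suc m. ennreal \<bar>davis_compensator M F f (Suc k) x\<bar>)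
          \<le> predictable_jump_variation M F f x" .
    qed simp
    finally show "ennreal (3 * sq_fun_n f m x + (\<Sum>k\<in>{1..Suc m}. \<bar>davis_compensator M F f k x\<bar>))
        \<le> ennreal 3 * sq_fun f x + predictable_jump_variation M F f x" .
  qed
qed

end

end

section \<open>The dual Doob inequality\<close>

locale dual_doob_setting = filtered_prob_space M F + mo_function M \<phi> C0
  for M :: "'a measure" and F \<phi> C0 +
  fixes K :: real
  assumes K_nonneg: "0 \<le> K"
    and doob_conj: "\<And>g. g \<in> borel_measurable M \<Longrightarrow> integrable M g \<Longrightarrow>
      lux M (conj_fun \<phi>) (\<lambda>x. ennreal \<bar>g x\<bar>) < \<infinity> \<Longrightarrow>
      lux M (conj_fun \<phi>) (doob_max M F g) \<le> ennreal K * lux M (conj_fun \<phi>) (\<lambda>x. ennreal \<bar>g x\<bar>)"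
begin

lemma K_C0_nonneg: "0 \<le> K*C0"
  using K_nonneg C0_ge_1 by simp

text \<open>
  Duality against the bounded weight \<open>w = \<phi>(u)/u\<close>: the Doob bound on \<open>L\<^sup>\<phi>\<^sup>*\<close> gives
  \<open>\<integral> Z \<cdot> M(w) \<lesssim> b J\<close>, and \<open>\<integral>\<phi>(u) = \<integral> u w \<le> \<integral> A w / l \<le> \<integral> Z \<cdot> M(w) / l\<close>.
\<close>

lemma nn_integral_phi_ext_le_of_cond_exp_bound:
  fixes Z :: "nat \<Rightarrow> 'a \<Rightarrow> real"
  assumes Z: "\<And>k. integrable M (Z k)" "\<And>k x. x \<in> space M \<Longrightarrow> 0 \<le> Z k x"
    and b: "0 < b" and modular_B: "phi_modular M \<phi> (\<lambda>x. \<Sum>k. ennreal (Z k x)) b \<le> 1"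
    and u[measurable]: "u \<in> borel_measurable M" "\<And>x. 0 \<le> u x"
    and l: "0 < l"
    and u_le: "\<And>x. ennreal (u x) \<le> ennreal (1/l) * (\<Sum>k. ennreal (real_cond_exp M (F k) (Z k) x))"
    and fin: "\<And>x. x \<in> space M \<Longrightarrow> phi_ext \<phi> x (ennreal (u x)) \<noteq> \<infinity>"
    and weight_le: "\<And>x. x \<in> space M \<Longrightarrow> young_weight \<phi> x (u x) \<le> c"
    and J: "1 \<le> J" "(\<integral>\<^sup>+x. phi_ext \<phi> x (ennreal (u x)) \<partial>M) \<le> ennreal J"
  shows "(\<integral>\<^sup>+x. phi_ext \<phi> x (ennreal (u x)) \<partial>M) \<le> ennreal (4*b*(K*C0*J + 1) / l)"
proof -
  define A where "A = (\<lambda>x. \<Sum>k. ennreal (real_cond_exp M (F k) (Z k) x))"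
  define B where "B = (\<lambda>x. \<Sum>k. ennreal (Z k x))"
  define w where "w = (\<lambda>x. young_weight \<phi> x (u x))"
  have [measurable]: "Z k \<in> borel_measurable M" for k using Z(1) by auto
  have [measurable]: "A \<in> borel_measurable M" "B \<in> borel_measurable M" "w \<in> borel_measurable M"
    unfolding A_def B_def w_def by measurable
  have w: "0 \<le> w x" for x unfolding w_def by (rule young_weight_nonneg)
  have KCJ: "0 \<le> K*C0*J" using mult_nonneg_nonneg[OF K_C0_nonneg, of J] J by simp
  have lux_w: "lux M (conj_fun \<phi>) (\<lambda>x. ennreal \<bar>w x\<bar>) \<le> ennreal (C0*J)"
    unfolding w_def by (rule lux_conj_young_weight_le[OF u fin J])
  have "integrable M w" by (rule integrable_const_bound[of _ c]) (use w weight_le in \<open>auto simp: w_def\<close>)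
  moreover have "lux M (conj_fun \<phi>) (\<lambda>x. ennreal \<bar>w x\<bar>) < \<infinity>"
    using le_less_trans[OF lux_w ennreal_less_top] by (simp add: infinity_ennreal_def)
  ultimately have "lux M (conj_fun \<phi>) (doob_max M F w) \<le> ennreal K * lux M (conj_fun \<phi>) (\<lambda>x. ennreal \<bar>w x\<bar>)"
    by (intro doob_conj) auto
  also have "\<dots> \<le> ennreal K * ennreal (C0*J)" by (intro mult_left_mono lux_w) simp
  also have "\<dots> < ennreal (K*C0*J + 1)"
    using K_nonneg C0_ge_1 J by (simp add: ennreal_mult[symmetric] mult.assoc ennreal_less_iff)
  finally have "lux_modular M (conj_fun \<phi>) (doob_max M F w) (K*C0*J + 1) \<le> 1"
    by (intro lux_modular_le_one_of_lux_less) (auto intro: conj_fun_mono)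
  then have B_doob: "(\<integral>\<^sup>+x. B x * doob_max M F w x \<partial>M) \<le> ennreal (4*b*(K*C0*J + 1))"
    using modular_B b KCJ unfolding B_def
    by (intro nn_integral_mult_le_of_modulars) (auto simp: doob_max_def[abs_def])
  have "(\<integral>\<^sup>+x. phi_ext \<phi> x (ennreal (u x)) \<partial>M) \<le> (\<integral>\<^sup>+x. ennreal (1/l) * (A x * ennreal (w x)) \<partial>M)"
  proof (rule nn_integral_mono)
    fix x assume x: "x \<in> space M"
    have "phi_ext \<phi> x (ennreal (u x)) = ennreal (u x) * ennreal (w x)"
      unfolding w_def using phi_ext_eq_mult_young_weight[OF u(2) fin[OF x]] u(2)
      by (simp add: ennreal_mult young_weight_nonneg)
    also have "\<dots> \<le> ennreal (1/l) * A x * ennreal (w x)"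
      using u_le[of x] by (intro mult_right_mono) (auto simp: A_def)
    finally show "phi_ext \<phi> x (ennreal (u x)) \<le> ennreal (1/l) * (A x * ennreal (w x))" by (simp add: mult.assoc)
  qed
  also have "\<dots> = ennreal (1/l) * (\<integral>\<^sup>+x. A x * ennreal (w x) \<partial>M)" by (rule nn_integral_cmult) simp
  also have "\<dots> \<le> ennreal (1/l) * (\<integral>\<^sup>+x. B x * doob_max M F w x \<partial>M)"
    unfolding A_def B_def
    by (intro mult_left_mono nn_integral_suminf_cond_exp_mult_le_doob_max[OF Z, of w c])
      (use w weight_le in \<open>auto simp: w_def\<close>)
  also have "\<dots> \<le> ennreal (1/l) * ennreal (4*b*(K*C0*J + 1))" by (intro mult_left_mono B_doob) simp
  also have "\<dots> = ennreal (4*b*(K*C0*J + 1) / l)"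
    using l b KCJ by (simp add: ennreal_mult[symmetric])
  finally show ?thesis .
qed

text \<open>Truncating to \<open>u = min (A/l, N)\<close>, cut off where \<open>\<phi>(N) > R\<close>, makes \<open>w\<close> bounded and
  \<open>I = \<integral>\<phi>(u)\<close> finite; the bound above then reads \<open>I \<le> J/2\<close> for \<open>J = max 1 I\<close>, forcing \<open>I \<le> 1/2\<close>.\<close>

lemma dual_doob_truncated:
  fixes Z :: "nat \<Rightarrow> 'a \<Rightarrow> real"
  assumes Z: "\<And>k. integrable M (Z k)" "\<And>k x. x \<in> space M \<Longrightarrow> 0 \<le> Z k x"
    and b: "0 < b" and modular_B: "phi_modular M \<phi> (\<lambda>x. \<Sum>k. ennreal (Z k x)) b \<le> 1"
    and N: "0 < N" and R: "0 < R"
  shows "(\<integral>\<^sup>+x. phi_ext \<phi> x (if phi_ext \<phi> x (ennreal N) \<le> ennreal R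
      then min (ennreal (1/(8*(K*C0+1)*b)) * (\<Sum>k. ennreal (real_cond_exp M (F k) (Z k) x))) (ennreal N)
      else 0) \<partial>M) \<le> ennreal (1/2)"
proof -
  define l where "l = 8*(K*C0+1)*b"
  have l: "0 < l" unfolding l_def using K_C0_nonneg b by simp
  have [measurable]: "Z k \<in> borel_measurable M" for k using Z(1) by auto
  define u where "u = (\<lambda>x. if phi_ext \<phi> x (ennreal N) \<le> ennreal R
    then min (ennreal (1/l) * (\<Sum>k. ennreal (real_cond_exp M (F k) (Z k) x))) (ennreal N) else 0)"
  have u_N: "u x \<le> ennreal N" for x unfolding u_def by auto
  define ur where "ur = (\<lambda>x. enn2real (u x))"
  have [measurable]: "ur \<in> borel_measurable M" unfolding ur_def u_def by measurable
  have ur: "ennreal (ur x) = u x" "0 \<le> ur x" "ur x \<le> N" for x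
    using u_N[of x] N le_less_trans[OF u_N ennreal_less_top] unfolding ur_def
    by (auto intro!: ennreal_enn2real enn2real_leI)
  have ur_R: "phi_ext \<phi> x (ennreal (ur x)) \<le> ennreal R" if x: "x \<in> space M" for x
  proof (cases "phi_ext \<phi> x (ennreal N) \<le> ennreal R")
    case True
    then show ?thesis unfolding ur(1) using phi_ext_mono[OF u_N[of x], of \<phi> x] by simp
  qed (simp add: ur(1) u_def)
  have ur_fin: "phi_ext \<phi> x (ennreal (ur x)) \<noteq> \<infinity>" if "x \<in> space M" for x
    using ur_R[OF that] by (auto simp: top_unique)
  have weight_le: "young_weight \<phi> x (ur x) \<le> C0*R/N" if x: "x \<in> space M" for x
  proof (cases "ur x = 0")
    case False
    then have "phi_ext \<phi> x (ennreal N) \<le> ennreal R" using ur(1,2)[of x] by (auto simp: u_def split: if_splits)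
    then show ?thesis by (rule young_weight_le[OF x ur(2,3)]) (use R in simp)
  qed (use C0_ge_1 R N in \<open>simp add: young_weight_def\<close>)
  define I where "I = (\<integral>\<^sup>+x. phi_ext \<phi> x (ennreal (ur x)) \<partial>M)"
  have "I \<le> (\<integral>\<^sup>+x. ennreal R \<partial>M)" unfolding I_def by (rule nn_integral_mono) (rule ur_R)
  then obtain Ir where I: "I = ennreal Ir" "0 \<le> Ir"
    by (cases I) (auto simp: emeasure_space_1 top_unique)
  define J where "J = max 1 Ir"
  have J: "1 \<le> J" "Ir \<le> J" unfolding J_def by auto
  have "I \<le> ennreal (4*b*(K*C0*J + 1) / l)"
    unfolding I_def
  proof (rule nn_integral_phi_ext_le_of_cond_exp_bound[OF Z b modular_B _ ur(2) l _ ur_fin weight_le J(1)])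
    show "ennreal (ur x) \<le> ennreal (1/l) * (\<Sum>k. ennreal (real_cond_exp M (F k) (Z k) x))" for x
      unfolding ur(1) u_def by auto
  qed (use I J in \<open>auto simp: I_def\<close>)
  also have "4*b*(K*C0*J + 1) / l = (K*C0*J + 1) / (2*(K*C0+1))"
  proof -
    have "4*b*c / (8*D*b) = c / (2*D)" if "0 < D" for D c using that b by (simp add: field_simps)
    from this[of "K*C0+1" "K*C0*J + 1"] show ?thesis unfolding l_def using K_C0_nonneg by simp
  qed
  also have "ennreal ((K*C0*J + 1) / (2*(K*C0+1))) \<le> ennreal (J/2)"
    using K_C0_nonneg J by (intro ennreal_leI) (simp add: field_simps mult_left_mono)
  finally have "Ir \<le> J/2" using I J by simp
  then have "Ir \<le> 1/2" unfolding J_def by linarith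
  then have "I \<le> ennreal (1/2)" using I by (simp only: ennreal_leI)
  then show ?thesis unfolding I_def ur(1) u_def l_def .
qed

lemma dual_doob_bounded_level:
  fixes Z :: "nat \<Rightarrow> 'a \<Rightarrow> real"
  assumes Z: "\<And>k. integrable M (Z k)" "\<And>k x. x \<in> space M \<Longrightarrow> 0 \<le> Z k x"
    and b: "0 < b" and modular_B: "phi_modular M \<phi> (\<lambda>x. \<Sum>k. ennreal (Z k x)) b \<le> 1"
  shows "(\<integral>\<^sup>+x. phi_ext \<phi> x (min (ennreal (1/(8*(K*C0+1)*b))
      * (\<Sum>k. ennreal (real_cond_exp M (F k) (Z k) x))) (ennreal N)) \<partial>M) \<le> ennreal (1/2)"
proof (cases "0 < N")
  case N: True
  define v where "v = (\<lambda>x. min (ennreal (1/(8*(K*C0+1)*b))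
      * (\<Sum>k. ennreal (real_cond_exp M (F k) (Z k) x))) (ennreal N))"
  define g where "g = (\<lambda>j x. phi_ext \<phi> x (if phi_ext \<phi> x (ennreal N) \<le> ennreal (real (Suc j)) then v x else 0))"
  have [measurable]: "Z k \<in> borel_measurable M" for k using Z(1) by auto
  have g_meas: "g j \<in> borel_measurable M" for j unfolding g_def v_def by measurable
  have g_inc: "incseq g"
  proof (intro incseq_SucI le_funI)
    fix j x
    have "ennreal (real (Suc j)) \<le> ennreal (real (Suc (Suc j)))" by (rule ennreal_leI) simp
    then show "g j x \<le> g (Suc j) x" unfolding g_def by (auto intro: order.trans)
  qed
  have "(\<integral>\<^sup>+x. phi_ext \<phi> x (v x) \<partial>M) \<le> (\<integral>\<^sup>+x. (SUP j. g j x) \<partial>M)"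
  proof (rule nn_integral_mono)
    fix x assume x: "x \<in> space M"
    obtain j :: nat where j: "\<phi> x N \<le> real j" using real_arch_simple by blast
    have "phi_ext \<phi> x (ennreal N) \<le> ennreal (\<phi> x N)" using phi_ext_le_phi[OF x] N by simp
    also have "\<dots> \<le> ennreal (real (Suc j))" using j by (intro ennreal_leI) simp
    finally have "g j x = phi_ext \<phi> x (v x)" by (simp add: g_def)
    then show "phi_ext \<phi> x (v x) \<le> (SUP j. g j x)" by (metis SUP_upper UNIV_I)
  qed
  also have "\<dots> = (SUP j. integral\<^sup>N M (g j))" by (rule nn_integral_monotone_convergence_SUP[OF g_inc g_meas])
  also have "\<dots> \<le> ennreal (1/2)"
  proof (rule SUP_least)
    fix j
    show "integral\<^sup>N M (g j) \<le> ennreal (1/2)"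
      using dual_doob_truncated[OF Z b modular_B N, of "real (Suc j)"] unfolding g_def v_def by simp
  qed
  finally show ?thesis unfolding v_def .
qed (simp add: ennreal_neg)

lemma dual_doob_modular:
  fixes Z :: "nat \<Rightarrow> 'a \<Rightarrow> real"
  assumes Z: "\<And>k. integrable M (Z k)" "\<And>k x. x \<in> space M \<Longrightarrow> 0 \<le> Z k x"
    and b: "0 < b" and modular_B: "phi_modular M \<phi> (\<lambda>x. \<Sum>k. ennreal (Z k x)) b \<le> 1"
  shows "phi_modular M \<phi> (\<lambda>x. \<Sum>k. ennreal (real_cond_exp M (F k) (Z k) x)) (8*(K*C0+1)*b) \<le> 1"
proof -
  define u where "u = (\<lambda>x. ennreal (1/(8*(K*C0+1)*b)) * (\<Sum>k. ennreal (real_cond_exp M (F k) (Z k) x)))"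
  define g where "g = (\<lambda>n x. phi_ext \<phi> x (min (u x) (ennreal (real n))))"
  have [measurable]: "Z k \<in> borel_measurable M" for k using Z(1) by auto
  have g_meas: "g n \<in> borel_measurable M" for n unfolding g_def u_def by measurable
  have g_inc: "incseq g"
    by (intro incseq_SucI le_funI) (auto simp: g_def intro!: phi_ext_mono min.mono ennreal_leI)
  have "phi_modular M \<phi> (\<lambda>x. \<Sum>k. ennreal (real_cond_exp M (F k) (Z k) x)) (8*(K*C0+1)*b)
      \<le> (\<integral>\<^sup>+x. (SUP n. g n x) \<partial>M)"
    unfolding phi_modular_def g_def u_def by (rule nn_integral_mono) (rule phi_ext_le_SUP_min)
  also have "\<dots> = (SUP n. integral\<^sup>N M (g n))" by (rule nn_integral_monotone_convergence_SUP[OF g_inc g_meas])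
  also have "\<dots> \<le> ennreal (1/2)"
    using dual_doob_bounded_level[OF Z b modular_B] unfolding g_def u_def by (intro SUP_least) simp
  also have "\<dots> \<le> ennreal 1" by (rule ennreal_leI) simp
  finally show ?thesis by simp
qed

context
  fixes f :: "nat \<Rightarrow> 'a \<Rightarrow> real" and l :: real
  assumes martingale: "is_martingale0 M F f" and l: "0 < l" and HS_less: "HS_norm M \<phi> f < ennreal l"
begin

lemma phi_modular_sq_fun_le_one: "phi_modular M \<phi> (sq_fun f) l \<le> 1"
  using phi_modular_le_one_of_lux_phi_less[OF l] HS_less by (simp add: HS_norm_def)

lemma phi_modular_jump_variation_le_one: "phi_modular M \<phi> (jump_variation f) (2*l) \<le> 1"
proof -
  have "phi_modular M \<phi> (jump_variation f) (2*l) \<le> phi_modular M \<phi> (\<lambda>x. ennreal 2 * sq_fun f x) (2*l)"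
    by (intro phi_modular_mono_AE AE_I2 jump_variation_le)
  also have "\<dots> = phi_modular M \<phi> (sq_fun f) l" by (rule phi_modular_scale) (use l in auto)
  finally show ?thesis using phi_modular_sq_fun_le_one by simp
qed

lemma phi_modular_predictable_jump_variation_le_one:
  "phi_modular M \<phi> (predictable_jump_variation M F f) (16*(K*C0+1)*l) \<le> 1"
proof -
  have "phi_modular M \<phi> (\<lambda>x. \<Sum>k. ennreal (real_cond_exp M (F k) (\<lambda>y. \<bar>davis_jump f (Suc k) y\<bar>) x))
      (8*(K*C0+1)*(2*l)) \<le> 1"
    using integrable_davis_jump[OF martingale] l phi_modular_jump_variation_le_one
    by (intro dual_doob_modular) (auto simp: jump_variation_def[abs_def])
  moreover have "8*(K*C0+1)*(2*l) = 16*(K*C0+1)*l" by simp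
  ultimately show ?thesis by (simp only: predictable_jump_variation_def[abs_def])
qed

lemma G_norm_davis_h_le: "G_norm M \<phi> (davis_h M F f) \<le> ennreal (128*C0*(K*C0+1)*l)"
proof -
  define a where "a = 16*(K*C0+1)*l"
  have a: "0 < a" "2*l \<le> a" using K_C0_nonneg l by (auto simp: a_def)
  have "phi_modular M \<phi> (\<lambda>x. \<Sum>n. ennreal \<bar>mart_diff (davis_h M F f) (Suc n) x\<bar>) (4*C0*a)
      \<le> phi_modular M \<phi> (\<lambda>x. jump_variation f x + predictable_jump_variation M F f x) (4*C0*a)"
    by (rule phi_modular_mono_AE[OF AE_davis_h_variation_le[OF martingale]])
  also have "\<dots> \<le> 1"
  proof (rule phi_modular_add_le_one[OF borel_measurable_jump_variation[OF martingale]
        borel_measurable_predictable_jump_variation[OF martingale] a(1)])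
    show "phi_modular M \<phi> (jump_variation f) a \<le> 1"
      by (rule order.trans[OF phi_modular_antimono phi_modular_jump_variation_le_one]) (use a l in auto)
    show "phi_modular M \<phi> (predictable_jump_variation M F f) a \<le> 1"
      unfolding a_def by (rule phi_modular_predictable_jump_variation_le_one)
  qed
  finally have "G_norm M \<phi> (davis_h M F f) \<le> ennreal (2*(4*C0*a))"
    unfolding G_norm_def using a C0_ge_1 by (intro lux_phi_le_of_phi_modular) auto
  moreover have "2*(4*C0*a) = 128*C0*(K*C0+1)*l" by (simp add: a_def algebra_simps)
  ultimately show ?thesis by simp
qed

lemma Q_norm_davis_g_le: "Q_norm M F \<phi> (davis_g M F f) \<le> ennreal (128*C0*(K*C0+1)*l)"
proof -
  define a where "a = 16*(K*C0+1)*l"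
  have a: "0 < a" "3*l \<le> a" using K_C0_nonneg l by (auto simp: a_def)
  define ctrl where "ctrl = (\<lambda>m x. 3 * sq_fun_n f m x + (\<Sum>k\<in>{1..Suc m}. \<bar>davis_compensator M F f k x\<bar>))"
  have "phi_modular M \<phi> (\<lambda>x. ennreal 3 * sq_fun f x) a \<le> phi_modular M \<phi> (\<lambda>x. ennreal 3 * sq_fun f x) (3*l)"
    using a l by (intro phi_modular_antimono) auto
  also have "\<dots> = phi_modular M \<phi> (sq_fun f) l" by (rule phi_modular_scale) (use l in auto)
  finally have sq_fun_3: "phi_modular M \<phi> (\<lambda>x. ennreal 3 * sq_fun f x) a \<le> 1"
    using phi_modular_sq_fun_le_one by simp
  have "phi_modular M \<phi> (\<lambda>x. SUP m. ennreal (ctrl m x)) (4*C0*a)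
      \<le> phi_modular M \<phi> (\<lambda>x. ennreal 3 * sq_fun f x + predictable_jump_variation M F f x) (4*C0*a)"
    unfolding ctrl_def by (rule phi_modular_mono_AE[OF AE_davis_g_control_le[OF martingale]])
  also have "\<dots> \<le> 1"
    by (rule phi_modular_add_le_one[OF _ borel_measurable_predictable_jump_variation[OF martingale] a(1) sq_fun_3])
      (use borel_measurable_sq_fun[OF martingale] phi_modular_predictable_jump_variation_le_one
        in \<open>auto simp: a_def\<close>)
  finally have "lux_phi M \<phi> (\<lambda>x. SUP m. ennreal (ctrl m x)) \<le> ennreal (2*(4*C0*a))"
    using a C0_ge_1 by (intro lux_phi_le_of_phi_modular) auto
  moreover have "Q_norm M F \<phi> (davis_g M F f) \<le> lux_phi M \<phi> (\<lambda>x. SUP m. ennreal (ctrl m x))"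
    unfolding Q_norm_def
    by (rule INF_lower) (use Q_control_davis_g[OF martingale] in \<open>simp only: ctrl_def mem_Collect_eq\<close>)
  moreover have "2*(4*C0*a) = 128*C0*(K*C0+1)*l" by (simp add: a_def algebra_simps)
  ultimately show ?thesis by simp
qed

end

lemma davis_decomposition_norms_le:
  assumes f: "is_martingale0 M F f" and HS: "HS_norm M \<phi> f < \<infinity>"
  shows "G_norm M \<phi> (davis_h M F f) \<le> ennreal (128*C0*(K*C0+1)) * HS_norm M \<phi> f"
    and "Q_norm M F \<phi> (davis_g M F f) \<le> ennreal (128*C0*(K*C0+1)) * HS_norm M \<phi> f"
proof -
  have C: "0 < 128*C0*(K*C0+1)" using C0_ge_1 K_C0_nonneg by (simp add: add_nonneg_pos)
  show "G_norm M \<phi> (davis_h M F f) \<le> ennreal (128*C0*(K*C0+1)) * HS_norm M \<phi> f"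
    by (rule ennreal_le_mult_of_forall_less[OF HS C G_norm_davis_h_le[OF f]])
  show "Q_norm M F \<phi> (davis_g M F f) \<le> ennreal (128*C0*(K*C0+1)) * HS_norm M \<phi> f"
    by (rule ennreal_le_mult_of_forall_less[OF HS C Q_norm_davis_g_le[OF f]])
qed

end

lemma mo_function_of_unif_lower_type:
  assumes mo: "musielak_orlicz M \<phi>" and p: "1 \<le> p" and lower: "unif_lower_type M \<phi> p"
  obtains C0 where "mo_function M \<phi> C0"
proof -
  obtain C where C: "0 < C"
    "\<And>x s t. x \<in> space M \<Longrightarrow> s \<in> {0<..<1} \<Longrightarrow> 0 \<le> t \<Longrightarrow> \<phi> x (s*t) \<le> C * s powr p * \<phi> x t"
    using lower unfolding unif_lower_type_def by blast
  have "mo_function M \<phi> (max C 1)"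
  proof
    fix x and s t :: real assume x: "x \<in> space M" and s: "0 < s" "s < 1" and t: "0 \<le> t"
    have "mono_on {0..} (\<phi> x)" "\<phi> x 0 = 0" using mo x unfolding musielak_orlicz_def by auto
    then have \<phi>_t: "0 \<le> \<phi> x t" using t by (metis atLeast_iff mono_onD order_refl)
    have "s powr p \<le> s powr 1" by (rule powr_mono') (use s p in auto)
    then have "C * s powr p \<le> max C 1 * s" using C(1) s by (intro mult_mono) auto
    then show "\<phi> x (s*t) \<le> max C 1 * s * \<phi> x t"
      using C(2)[OF x _ t] s mult_right_mono[OF _ \<phi>_t] by (meson greaterThanLessThan_iff order.trans)
  qed (use mo in auto)
  then show thesis by (rule that)
qed

lemma dual_doob_setting_of_doob_bound:
  assumes "prob_space M" "filtration_seq M F" "mo_function M \<phi> C0"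
    and doob: "\<forall>g. g \<in> borel_measurable M \<and> integrable M g \<and>
      lux M (conj_fun \<phi>) (\<lambda>x. ennreal \<bar>g x\<bar>) < \<infinity> \<longrightarrow>
      lux M (conj_fun \<phi>) (doob_max M F g) \<le> ennreal K * lux M (conj_fun \<phi>) (\<lambda>x. ennreal \<bar>g x\<bar>)"
  shows "dual_doob_setting M F \<phi> C0 (max K 0)"
proof -
  have "ennreal (max K 0) = ennreal K" by (cases "0 \<le> K") (auto simp: ennreal_neg)
  then show ?thesis
    using assms
    by (intro dual_doob_setting.intro filtered_prob_space.intro filtered_prob_space_axioms.intro
        dual_doob_setting_axioms.intro) auto
qed

theorem lemma5p10:
  fixes M :: "'a measure" and F :: "nat \<Rightarrow> 'a measure"
    and \<phi> :: "'a \<Rightarrow> real \<Rightarrow> real" and p :: real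
  assumes "prob_space M"
    and "filtration_seq M F"
    and "musielak_orlicz M \<phi>"
    and "1 \<le> p"
    and "unif_lower_type M \<phi> p"
    and "\<exists>K. \<forall>g. g \<in> borel_measurable M \<and> integrable M g \<and>
               lux M (conj_fun \<phi>) (\<lambda>x. ennreal \<bar>g x\<bar>) < \<infinity> \<longrightarrow>
               lux M (conj_fun \<phi>) (doob_max M F g) \<le> ennreal K * lux M (conj_fun \<phi>) (\<lambda>x. ennreal \<bar>g x\<bar>)"
  shows "\<exists>C>0. \<forall>f. is_martingale0 M F f \<and> HS_norm M \<phi> f < \<infinity> \<longrightarrow>
           (\<exists>h g. is_martingale0 M F h \<and> G_norm M \<phi> h < \<infinity> \<and>
                  is_martingale0 M F g \<and> Q_norm M F \<phi> g < \<infinity> \<and>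
                  (\<forall>n. AE x in M. f n x = h n x + g n x) \<and>
                  G_norm M \<phi> h \<le> ennreal C * HS_norm M \<phi> f \<and>
                  Q_norm M F \<phi> g \<le> ennreal C * HS_norm M \<phi> f)"
proof -
  obtain C0 where mo: "mo_function M \<phi> C0" using mo_function_of_unif_lower_type assms(3-5) by blast
  obtain K where K: "dual_doob_setting M F \<phi> C0 K"
    using dual_doob_setting_of_doob_bound[OF assms(1,2) mo] assms(6) by blast
  interpret dual_doob_setting M F \<phi> C0 K by (rule K)
  define C where "C = 128*C0*(K*C0+1)"
  have C: "0 < C" unfolding C_def using C0_ge_1 K_C0_nonneg by (simp add: add_nonneg_pos)
  show ?thesis
  proof (intro exI[of _ C] conjI allI impI C)
    fix f assume "is_martingale0 M F f \<and> HS_norm M \<phi> f < \<infinity>"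
    then have f: "is_martingale0 M F f" and HS: "HS_norm M \<phi> f < \<infinity>" by auto
    have "ennreal C * HS_norm M \<phi> f < \<infinity>"
      using HS by (simp add: ennreal_mult_less_top infinity_ennreal_def)
    then show "\<exists>h g. is_martingale0 M F h \<and> G_norm M \<phi> h < \<infinity> \<and>
        is_martingale0 M F g \<and> Q_norm M F \<phi> g < \<infinity> \<and>
        (\<forall>n. AE x in M. f n x = h n x + g n x) \<and>
        G_norm M \<phi> h \<le> ennreal C * HS_norm M \<phi> f \<and> Q_norm M F \<phi> g \<le> ennreal C * HS_norm M \<phi> f"
      using martingale_davis_h[OF f] martingale_davis_g[OF f] davis_decomposition_norms_le[OF f HS]
      by (intro exI[of _ "davis_h M F f"] exI[of _ "davis_g M F f"])
        (auto simp: C_def davis_g_def intro: le_less_trans)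
  qed
qed

end
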